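(* $\mathrm T_s(\mathbb F)\subseteq\mathsf{TC}^0$: every language recognized by a transformer over floats with (strong) saturated attention and size-preserving embedding and activation functions is in (non-uniform) $\mathsf{TC}^0$.
   Context: Datatypes. All values are binary strings. A float is a rational number whose denominator is a power of $2$, encoded as a sign bit together with a pair $\langle p,q\rangle$ of unsigned binary integers (value $(2s-1)p/q$, $q$ a power of $2$); addition and multiplication are exact rational operations. Division is via an approximate inverse: for an integer $p$, $p^{-1}$ has numerator $\lfloor 2^{|p|}/p\rfloor$ and denominator $2^{|p|}$; dividing by a float $\langle p,q\rangle$ multiplies by numerator $\lfloor 2^{|p|}/p\rfloor\cdot q$ over denominator $2^{|p|}$. The size $|x|$ of a value is its length in bits. A function $f$ on bitstrings is size-preserving if there are constants $c,N$ with $|f(x)|\le c|x|$ whenever $|x|\ge N$; $\mathcal S$ is the set of such functions. Saturated attention: for $a\in\mathbb D^n$, $\mathcal M(a)=\{i:a_i=\max_j a_j\}$, $s(a)_j=1/|\mathcal M(a)|$ for $j\in\mathcal M(a)$, else $0$. Transformer over datatype $\mathbb D$ with finite alphabet $\Sigma$, dimension $k$, $L$ layers, $H$ heads: embedding $\phi:\Sigma\times\mathbb N\to\mathbb D^k$ in $\mathcal S$, scoring functions $s_{\ell,h}:\mathbb D^k\times\mathbb D^k\to\mathbb D$, activation functions $f_\ell\in\mathcal S$. On $w\in\Sigma^n$: $v_{0,i}=\phi(w_i,i)$; $a_{\ell,h,i,j}=s_{\ell,h}(v_{\ell,i},v_{\ell,j})$; $b_{\ell+1,h,i}=\sum_j\alpha(a_{\ell,h,i,\cdot})_j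 v_{\ell,j}$ (arithmetic in $\mathbb D$); $v_{\ell+1,i}=f_{\ell+1}(v_{\ell,i},b_{\ell+1,1,i},\dots,b_{\ell+1,H,i})$. It recognizes $L$ if for a rational affine map $W,b$: $W v_{L,1}(w)+b>0\iff w\in L$. $\mathrm T_\alpha(\mathbb D)$ is the class of languages so recognized with attention $\alpha$, datatype $\mathbb D$, some $k$, and embedding/activation functions in $\mathcal S$. $\mathsf{TC}^0$ is the class of languages recognized by non-uniform circuit families $\{C_n\}$ of polynomial size and constant depth, with unbounded fan-in AND, OR and threshold gates (a threshold gate $\theta_{\ge k}$ outputs $1$ iff at least $k$ of its inputs are $1$, similarly $\theta_{\le k}$), whose leaves are input bits and their negations. For a language over a general alphabet $\Sigma$, each symbol is encoded as a one-hot vector over $\Sigma$ and the family recognizes $L$ iff $C_{|w|\cdot|\Sigma|}(w)=1\iff w\in L$. *)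

theory Defs
  imports Main "HOL-Library.Log_Nat"
begin

text \<open>Length of the binary representation of a natural number (0 is written as one bit).\<close>
definition bitlen :: "nat \<Rightarrow> nat" where
  "bitlen n = max 1 (floorlog 2 n)"

text \<open>A float is a sign bit s together with a pair p, q of unsigned binary integers,
  q a power of two; we store q = 2^e via its exponent e. Its value is (2s-1) p / q.\<close>
datatype fl = Fl (fl_sign: bool) (fl_num: nat) (fl_exp: nat)

definition fl_val :: "fl \<Rightarrow> rat" where
  "fl_val x = (if fl_sign x then 1 else -1) * of_nat (fl_num x) / 2 ^ fl_exp x"

definition fl_size :: "fl \<Rightarrow> nat" where
  "fl_size x = 1 + bitlen (fl_num x) + bitlen (2 ^ fl_exp x)"

definition vec_size :: "fl list \<Rightarrow> nat" where
  "vec_size v = sum_list (map fl_size v)"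

definition vecs_size :: "fl list list \<Rightarrow> nat" where
  "vecs_size vs = sum_list (map vec_size vs)"

definition fl_zero :: fl where
  "fl_zero = Fl True 0 0"

definition sgn_int :: "bool \<Rightarrow> int" where
  "sgn_int s = (if s then 1 else -1)"

definition fl_mul :: "fl \<Rightarrow> fl \<Rightarrow> fl" where
  "fl_mul x y = Fl (fl_sign x = fl_sign y) (fl_num x * fl_num y) (fl_exp x + fl_exp y)"

definition fl_add :: "fl \<Rightarrow> fl \<Rightarrow> fl" where
  "fl_add x y = (let E = max (fl_exp x) (fl_exp y);
                     a = sgn_int (fl_sign x) * int (fl_num x) * 2 ^ (E - fl_exp x)
                       + sgn_int (fl_sign y) * int (fl_num y) * 2 ^ (E - fl_exp y)
                 in Fl (a \<ge> 0) (nat \<bar>a\<bar>) E)"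

definition fl_inv_nat :: "nat \<Rightarrow> fl" where
  "fl_inv_nat m = Fl True (2 ^ bitlen m div m) (bitlen m)"

definition vec_add :: "fl list \<Rightarrow> fl list \<Rightarrow> fl list" where
  "vec_add u v = map2 fl_add u v"

definition vec_scale :: "fl \<Rightarrow> fl list \<Rightarrow> fl list" where
  "vec_scale a v = map (fl_mul a) v"

definition sat_attn :: "fl list \<Rightarrow> fl list" where
  "sat_attn a = (let m = Max (set (map fl_val a));
                     M = card {j. j < length a \<and> fl_val (a ! j) = m}
                 in map (\<lambda>x. if fl_val x = m then fl_inv_nat M else fl_zero) a)"

definition weighted_sum :: "nat \<Rightarrow> fl list \<Rightarrow> fl list list \<Rightarrow> fl list" where
  "weighted_sum k ws vs =
     foldl (\<lambda>acc (a, v). vec_add acc (vec_scale a v)) (replicate k fl_zero) (zip ws vs)"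

text \<open>One layer: scoring functions sc h (heads h = 0..H-1) and activation f, which receives
  the list [v_i, b_1, ..., b_H].\<close>
definition tf_layer :: "nat \<Rightarrow> nat \<Rightarrow> (nat \<Rightarrow> fl list \<Rightarrow> fl list \<Rightarrow> fl)
    \<Rightarrow> (fl list list \<Rightarrow> fl list) \<Rightarrow> fl list list \<Rightarrow> fl list list" where
  "tf_layer k H sc f vs =
     map (\<lambda>vi. f (vi # map (\<lambda>h. weighted_sum k (sat_attn (map (\<lambda>vj. sc h vi vj) vs)) vs) [0..<H]))
         vs"

text \<open>States v_l after l layers; positions are 1-based for the embedding.
  Scoring functions s l h are used in layer l (l = 0..L-1), activation f (l+1) produces v_(l+1).\<close>
primrec tf_run :: "nat \<Rightarrow> nat \<Rightarrow> ('a \<Rightarrow> nat \<Rightarrow> fl list)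
    \<Rightarrow> (nat \<Rightarrow> nat \<Rightarrow> fl list \<Rightarrow> fl list \<Rightarrow> fl) \<Rightarrow> (nat \<Rightarrow> fl list list \<Rightarrow> fl list)
    \<Rightarrow> 'a list \<Rightarrow> nat \<Rightarrow> fl list list" where
  "tf_run k H \<phi> s f w 0 = map2 \<phi> w [1..<length w + 1]"
| "tf_run k H \<phi> s f w (Suc l) = tf_layer k H (s l) (f (Suc l)) (tf_run k H \<phi> s f w l)"

definition emb_size_preserving :: "('a \<Rightarrow> nat \<Rightarrow> fl list) \<Rightarrow> bool" where
  "emb_size_preserving \<phi> \<longleftrightarrow>
     (\<exists>c N::nat. \<forall>\<sigma> i. bitlen i \<ge> N \<longrightarrow> vec_size (\<phi> \<sigma> i) \<le> c * bitlen i)"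

definition act_domain :: "nat \<Rightarrow> nat \<Rightarrow> fl list list set" where
  "act_domain k H = {xs. length xs = H + 1 \<and> (\<forall>x\<in>set xs. length x = k)}"

definition act_size_preserving :: "nat \<Rightarrow> nat \<Rightarrow> (fl list list \<Rightarrow> fl list) \<Rightarrow> bool" where
  "act_size_preserving k H g \<longleftrightarrow>
     (\<exists>c N::nat. \<forall>xs \<in> act_domain k H. vecs_size xs \<ge> N \<longrightarrow> vec_size (g xs) \<le> c * vecs_size xs)"

definition T_s_F :: "'a list set set" where
  "T_s_F = {Lang. \<exists>(k::nat) (nL::nat) (H::nat) (\<phi>::'a \<Rightarrow> nat \<Rightarrow> fl list) s f (W::rat list) (b::rat).
      (\<forall>\<sigma> i. length (\<phi> \<sigma> i) = k) \<and> emb_size_preserving \<phi> \<and>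
      (\<forall>l \<in> {1..nL}. (\<forall>xs \<in> act_domain k H. length (f l xs) = k) \<and> act_size_preserving k H (f l)) \<and>
      length W = k \<and>
      (\<forall>w. w \<noteq> [] \<longrightarrow>
         ((\<Sum>(c, x) \<leftarrow> zip W (hd (tf_run k H \<phi> s f w nL)). c * fl_val x) + b > 0 \<longleftrightarrow> w \<in> Lang))}"

text \<open>Circuits with unbounded fan-in AND, OR and threshold gates; leaves are input bits
  (Inp i False) or their negations (Inp i True). Circuits are represented as formulas (trees);
  for constant depth this yields the same class with polynomial size.\<close>
datatype circ = Inp nat bool | AndG "circ list" | OrG "circ list"
  | ThrGe nat "circ list" | ThrLe nat "circ list"

fun ceval :: "bool list \<Rightarrow> circ \<Rightarrow> bool" where
  "ceval x (Inp i neg) = ((if i < length x then x ! i else False) \<noteq> neg)"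
| "ceval x (AndG cs) = list_all id (map (ceval x) cs)"
| "ceval x (OrG cs) = list_ex id (map (ceval x) cs)"
| "ceval x (ThrGe t cs) = (length (filter id (map (ceval x) cs)) \<ge> t)"
| "ceval x (ThrLe t cs) = (length (filter id (map (ceval x) cs)) \<le> t)"

fun csize :: "circ \<Rightarrow> nat" where
  "csize (Inp i neg) = 1"
| "csize (AndG cs) = 1 + sum_list (map csize cs)"
| "csize (OrG cs) = 1 + sum_list (map csize cs)"
| "csize (ThrGe t cs) = 1 + sum_list (map csize cs)"
| "csize (ThrLe t cs) = 1 + sum_list (map csize cs)"

fun cdepth :: "circ \<Rightarrow> nat" where
  "cdepth (Inp i neg) = 0"
| "cdepth (AndG cs) = 1 + fold max (map cdepth cs) 0"
| "cdepth (OrG cs) = 1 + fold max (map cdepth cs) 0"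
| "cdepth (ThrGe t cs) = 1 + fold max (map cdepth cs) 0"
| "cdepth (ThrLe t cs) = 1 + fold max (map cdepth cs) 0"

definition alph_list :: "'a::finite list" where
  "alph_list = (SOME xs. distinct xs \<and> set xs = UNIV)"

definition one_hot :: "'a::finite \<Rightarrow> bool list" where
  "one_hot a = map (\<lambda>b. b = a) alph_list"

definition encode_word :: "'a::finite list \<Rightarrow> bool list" where
  "encode_word w = concat (map one_hot w)"

definition TC0 :: "'a::finite list set set" where
  "TC0 = {Lang. \<exists>(C::nat \<Rightarrow> circ) (d::nat) (c::nat).
      (\<forall>n. cdepth (C n) \<le> d) \<and> (\<forall>n. csize (C n) \<le> c * (n + 1) ^ c) \<and>
      (\<forall>w. ceval (encode_word w) (C (length w * card (UNIV :: 'a set))) \<longleftrightarrow> w \<in> Lang)}"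

end

theory Submission
  imports Defs
begin

(*
  Size preservation keeps every vector of the computation, and every output of an attention
  head, within O(log n) bits, so on inputs of length n each of them ranges over polynomially
  many values. A saturated attention head is determined by its maximal score and the number of
  positions attaining it (both with few possible values) and, coordinatewise, by a maximum of
  exponents and a sum of polynomially bounded integers; with the two parameters fixed, these are
  threshold conditions. Deciding "the vector at position i after layer l equals t" for every
  candidate value t thus takes a constant number of extra layers of threshold gates of polynomial
  fan-in per transformer layer, and constant depth with polynomial fan-in means polynomial size.
*)

section \<open>Bit lengths and exact floats\<close>

lemma bitlen_ge_1: "1 \<le> bitlen n"
  by (simp add: bitlen_def)

lemma bitlen_le_iff: "1 \<le> K \<Longrightarrow> bitlen n \<le> K \<longleftrightarrow> n < 2 ^ K"
  by (auto simp: bitlen_def floorlog_le_iff)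

lemma less_two_pow_bitlen: "n < 2 ^ bitlen n"
  using bitlen_le_iff[OF bitlen_ge_1, of n n] by simp

lemma bitlen_mono: "m \<le> n \<Longrightarrow> bitlen m \<le> bitlen n"
  unfolding bitlen_def using floorlog_mono[of m n 2] by linarith

lemma bitlen_two_pow: "bitlen (2 ^ e) = Suc e"
proof -
  have "floorlog 2 (1 * 2 ^ e) = floorlog 2 1 + e"
    by (rule floorlog_power) auto
  then show ?thesis
    by (simp add: bitlen_def floorlog_def)
qed

lemma two_pow_bitlen_le: "2 ^ bitlen n \<le> 2 * (n + 1)"
proof (cases "n = 0")
  case True
  then show ?thesis
    by (simp add: bitlen_def floorlog_def)
next
  case False
  have pos: "1 \<le> floorlog 2 n"
    using floorlog_geI[of 2 1 n] False by auto
  have "2 ^ (floorlog 2 n - 1) \<le> n"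
    using floorlog_bounds[of n 2] False by auto
  moreover have "(2::nat) ^ floorlog 2 n = 2 * 2 ^ (floorlog 2 n - 1)"
    using pos by (metis Suc_diff_le diff_Suc_1 power_Suc)
  ultimately show ?thesis
    using pos by (simp add: bitlen_def)
qed

definition fl_int :: "fl \<Rightarrow> int" where
  "fl_int x = sgn_int (fl_sign x) * int (fl_num x)"

text \<open>Exact addition never produces the negative zeros \<open>Fl False 0 e\<close>; on the remaining floats
  the representation is determined by exponent and value.\<close>
definition fl_normal :: "fl \<Rightarrow> bool" where
  "fl_normal x \<longleftrightarrow> (fl_num x = 0 \<longrightarrow> fl_sign x)"

lemma fl_val_eq: "fl_val x = of_int (fl_int x) / 2 ^ fl_exp x"
  by (simp add: fl_val_def fl_int_def sgn_int_def)

lemma fl_normal_eqI: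
  assumes "fl_normal x" "fl_normal y" "fl_exp x = fl_exp y" "fl_val x = fl_val y"
  shows "x = y"
proof -
  have "fl_int x = fl_int y"
    using assms(3,4) by (simp add: fl_val_eq)
  then have "fl_sign x = fl_sign y \<and> fl_num x = fl_num y"
    using assms(1,2) by (auto simp: fl_normal_def fl_int_def sgn_int_def split: if_splits)
  then show ?thesis
    using assms(3) by (simp add: fl.expand)
qed

lemma fl_num_eq: "fl_num x = nat \<bar>fl_int x\<bar>"
  by (simp add: fl_int_def sgn_int_def abs_mult)

lemma fl_size_eq: "fl_size x = 2 + bitlen (fl_num x) + fl_exp x"
  by (simp add: fl_size_def bitlen_two_pow)

lemma fl_exp_less_size: "fl_exp x < fl_size x"
  by (simp add: fl_size_eq)

lemma fl_num_less_two_pow_size: "fl_num x < 2 ^ fl_size x"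
proof -
  have "fl_num x < 2 ^ bitlen (fl_num x)"
    by (rule less_two_pow_bitlen)
  also have "\<dots> \<le> 2 ^ fl_size x"
    by (rule power_increasing) (auto simp: fl_size_eq)
  finally show ?thesis .
qed

lemma fl_exp_add: "fl_exp (fl_add x y) = max (fl_exp x) (fl_exp y)"
  by (simp add: fl_add_def Let_def)

lemma fl_normal_add: "fl_normal (fl_add x y)"
  by (simp add: fl_add_def Let_def fl_normal_def)

lemma scale_two_pow_div:
  "e \<le> E \<Longrightarrow> (of_int z * 2 ^ (E - e)) / (2::rat) ^ E = of_int z / 2 ^ e"
  by (simp add: power_diff)

lemma fl_val_Fl_int: "fl_val (Fl (0 \<le> a) (nat \<bar>a\<bar>) e) = of_int a / 2 ^ e"
  by (simp add: fl_val_def)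

lemma fl_val_add: "fl_val (fl_add x y) = fl_val x + fl_val y"
proof -
  define E where "E = max (fl_exp x) (fl_exp y)"
  have "fl_val (fl_add x y) = of_int (fl_int x * 2 ^ (E - fl_exp x) + fl_int y * 2 ^ (E - fl_exp y)) / 2 ^ E"
    unfolding fl_add_def Let_def fl_int_def E_def by (rule fl_val_Fl_int)
  also have "\<dots> = (of_int (fl_int x) * 2 ^ (E - fl_exp x)) / 2 ^ E
      + (of_int (fl_int y) * 2 ^ (E - fl_exp y)) / 2 ^ E"
    by (simp add: add_divide_distrib)
  also have "\<dots> = fl_val x + fl_val y"
    by (simp add: scale_two_pow_div E_def fl_val_eq)
  finally show ?thesis .
qed

lemma fl_exp_mul: "fl_exp (fl_mul x y) = fl_exp x + fl_exp y"
  by (simp add: fl_mul_def)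

lemma fl_val_mul: "fl_val (fl_mul x y) = fl_val x * fl_val y"
  by (simp add: fl_val_def fl_mul_def power_add)

lemma fl_zero_simps [simp]: "fl_normal fl_zero" "fl_exp fl_zero = 0" "fl_val fl_zero = 0"
  by (simp_all add: fl_zero_def fl_normal_def fl_val_def)

lemma of_nat_less_two_pow: "n < 2 ^ K \<Longrightarrow> (of_nat n :: 'a::linordered_semidom) < 2 ^ K"
  by (metis of_nat_less_iff of_nat_numeral of_nat_power)

lemma of_nat_fl_num: "of_nat (fl_num x) = \<bar>fl_val x\<bar> * 2 ^ fl_exp x"
  by (simp add: fl_val_def abs_mult)

lemma abs_fl_val_le: "\<bar>fl_val x\<bar> \<le> 2 ^ fl_size x"
proof -
  have "\<bar>fl_val x\<bar> \<le> \<bar>fl_val x\<bar> * 2 ^ fl_exp x"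
    by (simp add: mult_le_cancel_left1)
  also have "\<dots> \<le> 2 ^ fl_size x"
    using of_nat_less_two_pow[OF fl_num_less_two_pow_size[of x]] unfolding of_nat_fl_num[symmetric]
    by (rule less_imp_le)
  finally show ?thesis .
qed

lemma fl_size_le_of_magnitude:
  assumes "\<bar>fl_val x\<bar> * 2 ^ fl_exp x < 2 ^ K" "1 \<le> K"
  shows "fl_size x \<le> 2 + K + fl_exp x"
proof -
  have "fl_num x < 2 ^ K"
    using assms(1) unfolding of_nat_fl_num[symmetric]
    by (metis of_nat_less_iff of_nat_numeral of_nat_power)
  then show ?thesis
    using bitlen_le_iff[OF assms(2)] by (simp add: fl_size_eq)
qed

lemma fl_val_inv_nat: "0 \<le> fl_val (fl_inv_nat m)" "fl_val (fl_inv_nat m) \<le> 1"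
proof -
  have "(of_nat (2 ^ bitlen m div m) :: rat) \<le> 2 ^ bitlen m"
    by (metis div_le_dividend of_nat_le_iff of_nat_numeral of_nat_power)
  then show "0 \<le> fl_val (fl_inv_nat m)" "fl_val (fl_inv_nat m) \<le> 1"
    by (simp_all add: fl_val_def fl_inv_nat_def)
qed

lemma fl_val_scaled:
  assumes "fl_exp x \<le> B"
  shows "fl_val x = of_int (fl_int x * 2 ^ (B - fl_exp x)) / 2 ^ B"
  using assms by (simp add: fl_val_eq scale_two_pow_div)

lemma abs_fl_int_scaled_le:
  assumes "fl_size x \<le> B"
  shows "nat \<bar>fl_int x * 2 ^ (B - fl_exp x)\<bar> \<le> 4 ^ B"
proof -
  have "nat \<bar>fl_int x * 2 ^ (B - fl_exp x)\<bar> = fl_num x * 2 ^ (B - fl_exp x)"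
    by (simp add: fl_num_eq abs_mult nat_mult_distrib nat_power_eq)
  also have "\<dots> \<le> 2 ^ B * 2 ^ B"
    using order_less_le_trans[OF fl_num_less_two_pow_size power_increasing[OF assms]]
    by (intro mult_mono) simp_all
  also have "\<dots> = 4 ^ B"
    by (simp flip: power_mult_distrib)
  finally show ?thesis .
qed

lemma Max_insert_max:
  fixes a b :: "'a::linorder"
  shows "finite S \<Longrightarrow> Max (insert (max a b) S) = max a (Max (insert b S))"
  by (cases "S = {}") (simp_all add: max.assoc)

lemma foldl_fl_add:
  assumes "fl_normal x"
  shows "fl_normal (foldl fl_add x xs)"
    and "fl_exp (foldl fl_add x xs) = Max (insert (fl_exp x) (fl_exp ` set xs))"
    and "fl_val (foldl fl_add x xs) = fl_val x + (\<Sum>y\<leftarrow>xs. fl_val y)"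
  using assms
proof (induction xs arbitrary: x)
  case (Cons y ys)
  { case 1 show ?case using Cons.IH(1) by (simp add: fl_normal_add) }
  { case 2 show ?case using Cons.IH(2)[OF fl_normal_add]
      by (simp add: fl_exp_add Max_insert_max) }
  { case 3 show ?case using Cons.IH(3)[OF fl_normal_add] by (simp add: fl_val_add) }
qed simp_all

definition small_vecs :: "nat \<Rightarrow> nat \<Rightarrow> fl list set" where
  "small_vecs k B = {v. set v \<subseteq> {x. fl_size x \<le> B} \<and> length v = k}"

lemma small_floats_subset:
  "{x. fl_size x \<le> B} \<subseteq> (\<lambda>(s, p, e). Fl s p e) ` (UNIV \<times> {..<2 ^ B} \<times> {..<B})"
proof
  fix x
  assume "x \<in> {x. fl_size x \<le> B}"
  then have size: "fl_size x \<le> B"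
    by simp
  have "fl_num x < 2 ^ B"
    by (rule order_less_le_trans[OF fl_num_less_two_pow_size power_increasing]) (simp_all add: size)
  moreover have "fl_exp x < B"
    using fl_exp_less_size[of x] size by simp
  ultimately show "x \<in> (\<lambda>(s, p, e). Fl s p e) ` (UNIV \<times> {..<2 ^ B} \<times> {..<B})"
    by (intro image_eqI[of _ _ "(fl_sign x, fl_num x, fl_exp x)"]) auto
qed

lemma finite_small_floats: "finite {x. fl_size x \<le> B}"
  by (rule finite_subset[OF small_floats_subset]) auto

lemma card_small_floats: "card {x. fl_size x \<le> B} \<le> 8 ^ B"
proof -
  have "card {x. fl_size x \<le> B} \<le> card ((\<lambda>(s, p, e). Fl s p e) ` (UNIV \<times> {..<(2::nat) ^ B} \<times> {..<B}))"
    by (rule card_mono[OF _ small_floats_subset]) simp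
  also have "\<dots> \<le> card ((UNIV :: bool set) \<times> {..<(2::nat) ^ B} \<times> {..<B})"
    by (rule card_image_le) simp
  also have "\<dots> = 2 * 2 ^ B * B"
    by (simp add: card_cartesian_product)
  also have "\<dots> \<le> 2 ^ B * 2 ^ B * 2 ^ B"
  proof (cases "B = 0")
    case False
    then show ?thesis
      by (intro mult_mono) (simp_all add: self_le_power less_imp_le)
  qed simp
  also have "\<dots> = 8 ^ B"
    by (simp flip: power_mult_distrib)
  finally show ?thesis .
qed

lemma finite_small_vecs: "finite (small_vecs k B)"
  unfolding small_vecs_def by (rule finite_lists_length_eq[OF finite_small_floats])

lemma card_small_vecs: "card (small_vecs k B) \<le> 8 ^ (B * k)"
proof -
  have "card (small_vecs k B) = card {x. fl_size x \<le> B} ^ k"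
    unfolding small_vecs_def by (rule card_lists_length_eq[OF finite_small_floats])
  also have "\<dots> \<le> (8 ^ B) ^ k"
    by (rule power_mono[OF card_small_floats]) simp
  finally show ?thesis
    by (simp add: power_mult)
qed

lemma fl_size_le_vec_size: "x \<in> set v \<Longrightarrow> fl_size x \<le> vec_size v"
  unfolding vec_size_def by (rule member_le_sum_list) auto

lemma vec_size_le_vecs_size: "v \<in> set vs \<Longrightarrow> vec_size v \<le> vecs_size vs"
  unfolding vecs_size_def by (rule member_le_sum_list) auto

lemma small_vecsI: "length v = k \<Longrightarrow> vec_size v \<le> B \<Longrightarrow> v \<in> small_vecs k B"
  using fl_size_le_vec_size by (force simp: small_vecs_def)

lemma small_vecs_nth_size:
  assumes "v \<in> small_vecs k B" "c < k"
  shows "fl_size (v ! c) \<le> B"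
proof -
  have "v ! c \<in> set v"
    using assms by (simp add: small_vecs_def)
  then show ?thesis
    using assms(1) by (auto simp: small_vecs_def)
qed

lemma vec_size_le_length_mult: "(\<And>x. x \<in> set v \<Longrightarrow> fl_size x \<le> M) \<Longrightarrow> vec_size v \<le> length v * M"
  unfolding vec_size_def using sum_list_mono[of v fl_size "\<lambda>_. M"] by (simp add: sum_list_triv)

section \<open>Saturated attention\<close>

lemma foldl_vec_add_scale:
  assumes "length acc = k" "\<forall>(a, v)\<in>set ps. length v = k"
  shows "length (foldl (\<lambda>acc (a, v). vec_add acc (vec_scale a v)) acc ps) = k"
    and "c < k \<Longrightarrow> foldl (\<lambda>acc (a, v). vec_add acc (vec_scale a v)) acc ps ! c
      = foldl fl_add (acc ! c) (map (\<lambda>(a, v). fl_mul a (v ! c)) ps)"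
  using assms by (induction ps arbitrary: acc) (auto simp: vec_add_def vec_scale_def)

lemma weighted_sum_nth:
  assumes "\<forall>v\<in>set vs. length v = k"
  shows "length (weighted_sum k ws vs) = k"
    and "c < k \<Longrightarrow> weighted_sum k ws vs ! c = foldl fl_add fl_zero (map2 (\<lambda>a v. fl_mul a (v ! c)) ws vs)"
  using foldl_vec_add_scale[of "replicate k fl_zero" k "zip ws vs"] assms
  by (auto simp: weighted_sum_def dest: set_zip_rightD)

definition attn_max :: "(fl list \<Rightarrow> rat) \<Rightarrow> fl list list \<Rightarrow> rat" where
  "attn_max g vs = Max (g ` set vs)"

definition attn_count :: "(fl list \<Rightarrow> rat) \<Rightarrow> rat \<Rightarrow> fl list list \<Rightarrow> nat" where
  "attn_count g r vs = length (filter (\<lambda>v. g v = r) vs)"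

text \<open>Exponent and value of coordinate \<open>c\<close> of a saturated attention head whose maximal score is
  \<open>r\<close>, attained \<open>m\<close> times. Positions with weight zero still raise the exponent, because
  \<^const>\<open>fl_mul\<close> adds exponents even when a factor is zero.\<close>
definition attn_exp :: "(fl list \<Rightarrow> rat) \<Rightarrow> rat \<Rightarrow> nat \<Rightarrow> nat \<Rightarrow> fl list list \<Rightarrow> nat" where
  "attn_exp g r m c vs =
     Max (insert 0 ((\<lambda>v. (if g v = r then bitlen m else 0) + fl_exp (v ! c)) ` set vs))"

definition attn_val :: "(fl list \<Rightarrow> rat) \<Rightarrow> rat \<Rightarrow> nat \<Rightarrow> nat \<Rightarrow> fl list list \<Rightarrow> rat" where
  "attn_val g r m c vs = fl_val (fl_inv_nat m) * (\<Sum>v\<leftarrow>vs. if g v = r then fl_val (v ! c) else 0)"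

definition attn_output :: "nat \<Rightarrow> (fl list \<Rightarrow> rat) \<Rightarrow> rat \<Rightarrow> nat \<Rightarrow> fl list list \<Rightarrow> fl list \<Rightarrow> bool" where
  "attn_output k g r m vs y \<longleftrightarrow> length y = k \<and>
     (\<forall>c<k. fl_normal (y ! c) \<and> fl_exp (y ! c) = attn_exp g r m c vs \<and> fl_val (y ! c) = attn_val g r m c vs)"

lemma sat_attn_map:
  fixes sc :: "fl list \<Rightarrow> fl"
  defines "g \<equiv> fl_val \<circ> sc"
  shows "sat_attn (map sc vs) = map (\<lambda>v. if g v = attn_max g vs
      then fl_inv_nat (attn_count g (attn_max g vs) vs) else fl_zero) vs"
proof -
  have "card {j. j < length vs \<and> fl_val (map sc vs ! j) = m} = attn_count g m vs" for m
    by (auto simp: attn_count_def length_filter_conv_card g_def intro!: arg_cong[where f = card])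
  then show ?thesis
    by (simp add: sat_attn_def Let_def attn_max_def g_def image_image)
qed

lemma weighted_sum_sat_attn_eq_iff:
  fixes sc :: "fl list \<Rightarrow> fl" and vs :: "fl list list"
  defines "g \<equiv> fl_val \<circ> sc"
  defines "r \<equiv> attn_max g vs"
  defines "m \<equiv> attn_count g r vs"
  assumes "\<forall>v\<in>set vs. length v = k"
  shows "weighted_sum k (sat_attn (map sc vs)) vs = y \<longleftrightarrow> attn_output k g r m vs y"
proof -
  define z where "z = weighted_sum k (sat_attn (map sc vs)) vs"
  define wt where "wt v = (if g v = r then fl_inv_nat m else fl_zero)" for v
  have attn: "sat_attn (map sc vs) = map wt vs"
    unfolding sat_attn_map wt_def g_def r_def m_def ..
  have len: "length z = k"
    using weighted_sum_nth(1)[OF assms(4)] by (simp add: z_def)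
  have z: "fl_normal (z ! c) \<and> fl_exp (z ! c) = attn_exp g r m c vs \<and> fl_val (z ! c) = attn_val g r m c vs"
    if c: "c < k" for c
  proof -
    have zc: "z ! c = foldl fl_add fl_zero (map (\<lambda>v. fl_mul (wt v) (v ! c)) vs)"
      using weighted_sum_nth(2)[OF assms(4) c] by (simp add: z_def attn zip_map1 zip_same_conv_map comp_def)
    have exp: "fl_exp (wt v) = (if g v = r then bitlen m else 0)" for v
      by (simp add: wt_def fl_inv_nat_def)
    have val: "fl_val (wt v) * fl_val (v ! c) = fl_val (fl_inv_nat m) * (if g v = r then fl_val (v ! c) else 0)" for v
      by (simp add: wt_def)
    show ?thesis
      using foldl_fl_add[OF fl_zero_simps(1), of "map (\<lambda>v. fl_mul (wt v) (v ! c)) vs"]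
      by (simp add: zc attn_exp_def attn_val_def image_image fl_exp_mul exp fl_val_mul val
          comp_def sum_list_const_mult)
  qed
  show ?thesis
  proof
    assume "weighted_sum k (sat_attn (map sc vs)) vs = y"
    then show "attn_output k g r m vs y"
      using len z by (simp add: z_def attn_output_def)
  next
    assume "attn_output k g r m vs y"
    then have "z = y"
      using len z by (intro nth_equalityI) (auto simp: attn_output_def intro: fl_normal_eqI)
    then show "weighted_sum k (sat_attn (map sc vs)) vs = y"
      by (simp add: z_def)
  qed
qed

lemma attn_exp_le:
  assumes "\<forall>v\<in>set vs. fl_size (v ! c) \<le> B" "m \<le> length vs"
  shows "attn_exp g r m c vs \<le> bitlen (length vs) + B"
proof -
  have "bitlen m \<le> bitlen (length vs)"
    using assms(2) by (rule bitlen_mono)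
  then have "(if g v = r then bitlen m else 0) + fl_exp (v ! c) \<le> bitlen (length vs) + B"
    if "v \<in> set vs" for v
    using fl_exp_less_size[of "v ! c"] assms(1) that by fastforce
  then show ?thesis
    unfolding attn_exp_def by (subst Max_le_iff) auto
qed

lemma abs_attn_val_less:
  assumes "\<forall>v\<in>set vs. fl_size (v ! c) \<le> B"
  shows "\<bar>attn_val g r m c vs\<bar> < 2 ^ bitlen (length vs) * 2 ^ B"
proof -
  let ?S = "\<Sum>v\<leftarrow>vs. if g v = r then fl_val (v ! c) else 0"
  have "\<bar>?S\<bar> \<le> (\<Sum>v\<leftarrow>vs. \<bar>if g v = r then fl_val (v ! c) else 0\<bar>)"
    by (rule order_trans[OF sum_list_abs]) (simp add: comp_def)
  also have "\<dots> \<le> (\<Sum>v\<leftarrow>vs. 2 ^ B)"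
    by (rule sum_list_mono)
      (use assms in \<open>auto intro: order_trans[OF abs_fl_val_le power_increasing]\<close>)
  also have "\<dots> < 2 ^ bitlen (length vs) * 2 ^ B"
    using of_nat_less_two_pow[OF less_two_pow_bitlen[of "length vs"], where 'a = rat]
    by (simp add: sum_list_triv)
  finally show ?thesis
    using fl_val_inv_nat[of m] mult_left_le_one_le[of "\<bar>?S\<bar>" "fl_val (fl_inv_nat m)"]
    by (simp add: attn_val_def abs_mult)
qed

lemma weighted_sum_sat_attn_size:
  fixes sc :: "fl list \<Rightarrow> fl" and vs :: "fl list list"
  assumes vs: "\<forall>v\<in>set vs. length v = k \<and> (\<forall>x\<in>set v. fl_size x \<le> B)" and c: "c < k"
  shows "fl_size (weighted_sum k (sat_attn (map sc vs)) vs ! c) \<le> 2 + 3 * bitlen (length vs) + 3 * B"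
proof -
  define g where "g = fl_val \<circ> sc"
  define m where "m = attn_count g (attn_max g vs) vs"
  define y where "y = weighted_sum k (sat_attn (map sc vs)) vs ! c"
  let ?\<beta> = "bitlen (length vs)"
  have size: "\<forall>v\<in>set vs. fl_size (v ! c) \<le> B"
    using vs c by (simp add: nth_mem)
  have "fl_exp y = attn_exp g (attn_max g vs) m c vs" "fl_val y = attn_val g (attn_max g vs) m c vs"
    using weighted_sum_sat_attn_eq_iff[where sc = sc and vs = vs and k = k and
        y = "weighted_sum k (sat_attn (map sc vs)) vs"] vs c
    by (simp_all add: y_def g_def m_def attn_output_def)
  moreover have "m \<le> length vs"
    by (simp add: m_def attn_count_def)
  ultimately have exp: "fl_exp y \<le> ?\<beta> + B" and "\<bar>fl_val y\<bar> < 2 ^ ?\<beta> * 2 ^ B"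
    using attn_exp_le abs_attn_val_less size by simp_all
  then have "\<bar>fl_val y\<bar> * 2 ^ fl_exp y < 2 ^ (?\<beta> + B + fl_exp y)"
    by (simp add: power_add)
  then have "fl_size y \<le> 2 + (?\<beta> + B + fl_exp y) + fl_exp y"
    by (rule fl_size_le_of_magnitude) (use bitlen_ge_1[of "length vs"] in simp)
  then show ?thesis
    using exp by (simp add: y_def)
qed

section \<open>Threshold circuits of bounded fan-in and depth\<close>

fun fanin_le :: "nat \<Rightarrow> circ \<Rightarrow> bool" where
  "fanin_le F (Inp i neg) = True"
| "fanin_le F (AndG cs) = (length cs \<le> F \<and> (\<forall>c\<in>set cs. fanin_le F c))"
| "fanin_le F (OrG cs) = (length cs \<le> F \<and> (\<forall>c\<in>set cs. fanin_le F c))"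
| "fanin_le F (ThrGe t cs) = (length cs \<le> F \<and> (\<forall>c\<in>set cs. fanin_le F c))"
| "fanin_le F (ThrLe t cs) = (length cs \<le> F \<and> (\<forall>c\<in>set cs. fanin_le F c))"

lemma fanin_le_mono: "fanin_le F C \<Longrightarrow> F \<le> F' \<Longrightarrow> fanin_le F' C"
  by (induction C) auto

lemma fold_max_eq_Max: "fold max xs (0::nat) = Max (insert 0 (set xs))"
  by (metis Max.set_eq_fold list.simps(15))

lemma gate_size_le:
  assumes "length cs \<le> F" "\<forall>c\<in>set cs. csize c \<le> (F + 1) ^ cdepth c"
  shows "1 + sum_list (map csize cs) \<le> (F + 1) ^ (1 + fold max (map cdepth cs) 0)"
proof -
  let ?D = "fold max (map cdepth cs) 0"
  have "\<forall>c\<in>set cs. csize c \<le> (F + 1) ^ ?D"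
    using assms(2) by (force simp: fold_max_eq_Max intro: order_trans power_increasing)
  then have "sum_list (map csize cs) \<le> length cs * (F + 1) ^ ?D"
    using sum_list_mono[of cs csize "\<lambda>_. (F + 1) ^ ?D"] by (simp add: sum_list_triv)
  also have "\<dots> \<le> F * (F + 1) ^ ?D"
    using assms(1) by simp
  finally have "1 + sum_list (map csize cs) \<le> 1 + F * (F + 1) ^ ?D"
    by simp
  also have "\<dots> \<le> (F + 1) ^ (1 + ?D)"
    using zero_less_power[of "F + 1" ?D] by simp
  finally show ?thesis .
qed

lemma csize_le_fanin_pow_depth: "fanin_le F C \<Longrightarrow> csize C \<le> (F + 1) ^ cdepth C"
  by (induction C) (use gate_size_le in auto)

lemma gate_bounds:
  assumes "\<forall>c\<in>set cs. fanin_le F c \<and> cdepth c \<le> D" "length cs \<le> F"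
  shows "fanin_le F (AndG cs) \<and> cdepth (AndG cs) \<le> Suc D"
    and "fanin_le F (OrG cs) \<and> cdepth (OrG cs) \<le> Suc D"
    and "fanin_le F (ThrGe t cs) \<and> cdepth (ThrGe t cs) \<le> Suc D"
    and "fanin_le F (ThrLe t cs) \<and> cdepth (ThrLe t cs) \<le> Suc D"
  using assms by (auto simp: fold_max_eq_Max)

lemma alph_list_distinct_UNIV: "distinct (alph_list :: 'a::finite list) \<and> set (alph_list :: 'a list) = UNIV"
  unfolding alph_list_def by (rule someI_ex) (use finite_distinct_list[of "UNIV :: 'a set"] in auto)

lemma length_alph_list: "length (alph_list :: 'a::finite list) = card (UNIV :: 'a set)"
  using alph_list_distinct_UNIV distinct_card by metis

lemma length_encode_word:
  fixes w :: "'a::finite list"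
  shows "length (encode_word w) = length w * card (UNIV :: 'a set)"
  by (induction w) (auto simp: encode_word_def one_hot_def length_alph_list)

lemma encode_word_nth:
  fixes w :: "'a::finite list"
  assumes "j < length w" "p < card (UNIV :: 'a set)"
  shows "encode_word w ! (j * card (UNIV :: 'a set) + p) \<longleftrightarrow> alph_list ! p = w ! j"
  using assms
proof (induction w arbitrary: j)
  case (Cons a w)
  then show ?case
    by (cases j) (auto simp: encode_word_def one_hot_def length_alph_list nth_append)
qed simp

text \<open>Only fan-in and depth are tracked: by \<open>csize_le_fanin_pow_depth\<close>, polynomial fan-in and
  constant depth give polynomial size.\<close>
definition computes :: "nat \<Rightarrow> nat \<Rightarrow> nat \<Rightarrow> ('a::finite list \<Rightarrow> bool) \<Rightarrow> circ \<Rightarrow> bool" where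
  "computes F D n P C \<longleftrightarrow>
     fanin_le F C \<and> cdepth C \<le> D \<and> (\<forall>w. length w = n \<longrightarrow> ceval (encode_word w) C = P w)"

definition computable :: "nat \<Rightarrow> nat \<Rightarrow> nat \<Rightarrow> ('a::finite list \<Rightarrow> bool) \<Rightarrow> bool" where
  "computable F D n P \<longleftrightarrow> (\<exists>C. computes F D n P C)"

lemma computable_cong:
  "computable F D n P \<Longrightarrow> (\<And>w. length w = n \<Longrightarrow> P w = Q w) \<Longrightarrow> computable F D n Q"
  by (auto simp: computable_def computes_def)

lemma computable_mono:
  "computable F D n P \<Longrightarrow> F \<le> F' \<Longrightarrow> D \<le> D' \<Longrightarrow> computable F' D' n P"
  by (force simp: computable_def computes_def intro: fanin_le_mono)

lemma computable_input:
  fixes \<sigma> :: "'a::finite"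
  assumes "j < n"
  shows "computable F D n (\<lambda>w. w ! j = \<sigma>)"
proof -
  let ?K = "card (UNIV :: 'a set)"
  obtain p where p: "p < ?K" "alph_list ! p = \<sigma>"
    using alph_list_distinct_UNIV by (metis UNIV_I in_set_conv_nth length_alph_list)
  have "j * ?K + p < Suc j * ?K"
    using p(1) by simp
  also have "\<dots> \<le> n * ?K"
    using assms by (intro mult_le_mono1) simp
  finally have "j * ?K + p < n * ?K" .
  then have "ceval (encode_word w) (Inp (j * ?K + p) False) \<longleftrightarrow> w ! j = \<sigma>" if "length w = n" for w
    using encode_word_nth[of j w p] that assms p by (auto simp: length_encode_word)
  then have "computes F D n (\<lambda>w. w ! j = \<sigma>) (Inp (j * ?K + p) False)"
    by (simp add: computes_def)
  then show ?thesis
    by (auto simp: computable_def)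
qed

lemma computable_children:
  assumes "\<forall>i\<in>set is. computable F D n (P i)"
  obtains C where "\<forall>i\<in>set is. computes F D n (P i) (C i)"
  using assms bchoice[of "set is" "\<lambda>i C. computes F D n (P i) C"] by (auto simp: computable_def)

lemma computable_Ball:
  assumes "\<forall>i\<in>set is. computable F D n (P i)" "length is \<le> F"
  shows "computable F (Suc D) n (\<lambda>w. \<forall>i\<in>set is. P i w)"
proof -
  obtain C where C: "\<forall>i\<in>set is. computes F D n (P i) (C i)"
    using assms(1) computable_children by blast
  have "computes F (Suc D) n (\<lambda>w. \<forall>i\<in>set is. P i w) (AndG (map C is))"
    using gate_bounds(1)[of "map C is" F D] C assms(2) by (auto simp: computes_def list_all_iff)
  then show ?thesis
    by (auto simp: computable_def)
qed

lemma computable_Bex: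
  assumes "\<forall>i\<in>set is. computable F D n (P i)" "length is \<le> F"
  shows "computable F (Suc D) n (\<lambda>w. \<exists>i\<in>set is. P i w)"
proof -
  obtain C where C: "\<forall>i\<in>set is. computes F D n (P i) (C i)"
    using assms(1) computable_children by blast
  have "computes F (Suc D) n (\<lambda>w. \<exists>i\<in>set is. P i w) (OrG (map C is))"
    using gate_bounds(2)[of "map C is" F D] C assms(2) by (auto simp: computes_def list_ex_iff)
  then show ?thesis
    by (auto simp: computable_def)
qed

lemma computable_count_ge:
  assumes "\<forall>i\<in>set is. computable F D n (P i)" "length is \<le> F"
  shows "computable F (Suc D) n (\<lambda>w. t \<le> length (filter (\<lambda>i. P i w) is))"
proof -
  obtain C where C: "\<forall>i\<in>set is. computes F D n (P i) (C i)"
    using assms(1) computable_children by blast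
  then have "length (filter id (map (ceval (encode_word w)) (map C is))) = length (filter (\<lambda>i. P i w) is)"
    if "length w = n" for w
    using that by (auto simp: computes_def comp_def intro!: arg_cong[where f = length] filter_cong)
  then have "computes F (Suc D) n (\<lambda>w. t \<le> length (filter (\<lambda>i. P i w) is)) (ThrGe t (map C is))"
    using gate_bounds(3)[of "map C is" F D] C assms(2) by (auto simp: computes_def)
  then show ?thesis
    by (auto simp: computable_def)
qed

lemma computable_count_le:
  assumes "\<forall>i\<in>set is. computable F D n (P i)" "length is \<le> F"
  shows "computable F (Suc D) n (\<lambda>w. length (filter (\<lambda>i. P i w) is) \<le> t)"
proof -
  obtain C where C: "\<forall>i\<in>set is. computes F D n (P i) (C i)"
    using assms(1) computable_children by blast
  then have "length (filter id (map (ceval (encode_word w)) (map C is))) = length (filter (\<lambda>i. P i w) is)"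
    if "length w = n" for w
    using that by (auto simp: computes_def comp_def intro!: arg_cong[where f = length] filter_cong)
  then have "computes F (Suc D) n (\<lambda>w. length (filter (\<lambda>i. P i w) is) \<le> t) (ThrLe t (map C is))"
    using gate_bounds(4)[of "map C is" F D] C assms(2) by (auto simp: computes_def)
  then show ?thesis
    by (auto simp: computable_def)
qed

lemma computable_const:
  assumes "1 \<le> D"
  shows "computable F D n (\<lambda>w. b)"
proof -
  have "computable F (Suc 0) n (\<lambda>w. b)"
  proof (cases b)
    case True
    then show ?thesis
      using computable_Ball[of "[] :: nat list"] by simp
  next
    case False
    then show ?thesis
      using computable_Bex[of "[] :: nat list"] by simp
  qed
  then show ?thesis
    using computable_mono[OF _ order_refl] assms by simp
qed

lemma computable_not:
  assumes "computable F D n P" "1 \<le> F"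
  shows "computable F (Suc D) n (\<lambda>w. \<not> P w)"
proof -
  have "computable F (Suc D) n (\<lambda>w. length (filter (\<lambda>_. P w) [()]) \<le> 0)"
    by (rule computable_count_le) (use assms in auto)
  then show ?thesis
    by (rule computable_cong) simp
qed

lemma computable_conj:
  assumes "computable F D n P" "computable F D n Q" "2 \<le> F"
  shows "computable F (Suc D) n (\<lambda>w. P w \<and> Q w)"
  using computable_Ball[of "[P, Q]" F D n "\<lambda>R. R"] assms by simp

lemma computable_disj:
  assumes "computable F D n P" "computable F D n Q" "2 \<le> F"
  shows "computable F (Suc D) n (\<lambda>w. P w \<or> Q w)"
  using computable_Bex[of "[P, Q]" F D n "\<lambda>R. R"] assms by simp

lemma computable_weighted_ge:
  fixes a :: "'i \<Rightarrow> int"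
  assumes "\<forall>i\<in>set is. computable F D n (P i)" "(\<Sum>i\<leftarrow>is. nat \<bar>a i\<bar>) \<le> F" "1 \<le> F"
  shows "computable F (Suc (Suc D)) n (\<lambda>w. T \<le> (\<Sum>i\<leftarrow>is. if P i w then a i else 0))"
proof -
  \<comment> \<open>Input \<open>i\<close> is fed \<open>|a i|\<close> times into one threshold gate, negated when \<open>a i < 0\<close>.\<close>
  define js where "js = concat (map (\<lambda>i. replicate (nat \<bar>a i\<bar>) i) is)"
  define Q where "Q = (\<lambda>i w. if 0 \<le> a i then P i w else \<not> P i w)"
  define N where "N = (\<Sum>i\<leftarrow>is. if a i < 0 then - a i else 0)"
  have count: "int (length (filter (\<lambda>i. Q i w) js)) = (\<Sum>i\<leftarrow>is. if P i w then a i else 0) + N" for w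
    unfolding js_def N_def Q_def by (induction "is") auto
  have "computable F (Suc D) n (Q i)" if "i \<in> set is" for i
  proof (cases "0 \<le> a i")
    case True
    then show ?thesis
      using assms(1) that computable_mono[of F D n "P i" F "Suc D"] by (simp add: Q_def)
  next
    case False
    then show ?thesis
      using assms(1,3) that by (simp add: Q_def computable_not)
  qed
  then have "\<forall>i\<in>set js. computable F (Suc D) n (Q i)"
    by (auto simp: js_def)
  moreover have "length js \<le> F"
    using assms(2) by (simp add: js_def length_concat comp_def)
  ultimately have "computable F (Suc (Suc D)) n (\<lambda>w. nat (T + N) \<le> length (filter (\<lambda>i. Q i w) js))"
    by (rule computable_count_ge)
  then show ?thesis
    by (rule computable_cong) (simp add: nat_le_iff count)
qed

lemma computable_weighted_eq:
  fixes a :: "'i \<Rightarrow> int"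
  assumes "\<forall>i\<in>set is. computable F D n (P i)" "(\<Sum>i\<leftarrow>is. nat \<bar>a i\<bar>) \<le> F" "2 \<le> F"
  shows "computable F (D + 4) n (\<lambda>w. (\<Sum>i\<leftarrow>is. if P i w then a i else 0) = T)"
proof -
  have "computable F (D + 3) n (\<lambda>w. T \<le> (\<Sum>i\<leftarrow>is. if P i w then a i else 0))"
    by (rule computable_mono[OF computable_weighted_ge[OF assms(1,2)]]) (use assms(3) in auto)
  moreover have "computable F (D + 3) n (\<lambda>w. \<not> T + 1 \<le> (\<Sum>i\<leftarrow>is. if P i w then a i else 0))"
    using computable_not[OF computable_weighted_ge[OF assms(1,2)]] assms(3) by (simp add: eval_nat_numeral)
  ultimately have "computable F (Suc (D + 3)) n (\<lambda>w. T \<le> (\<Sum>i\<leftarrow>is. if P i w then a i else 0)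
      \<and> \<not> T + 1 \<le> (\<Sum>i\<leftarrow>is. if P i w then a i else 0))"
    using assms(3) by (rule computable_conj)
  then have "computable F (D + 4) n (\<lambda>w. T \<le> (\<Sum>i\<leftarrow>is. if P i w then a i else 0)
      \<and> \<not> T + 1 \<le> (\<Sum>i\<leftarrow>is. if P i w then a i else 0))"
    by (simp add: eval_nat_numeral)
  then show ?thesis
    by (rule computable_cong) auto
qed

definition values_at :: "nat \<Rightarrow> ('a list \<Rightarrow> 'b) \<Rightarrow> 'b set" where
  "values_at n g = g ` {w. length w = n}"

lemma finite_values_at: "finite (values_at n (g :: 'a::finite list \<Rightarrow> 'b))"
  using finite_lists_length_eq[of "UNIV :: 'a set" n] by (simp add: values_at_def)

lemma values_atI: "length w = n \<Longrightarrow> g w \<in> values_at n g"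
  by (simp add: values_at_def)

definition val_computable :: "nat \<Rightarrow> nat \<Rightarrow> nat \<Rightarrow> ('a::finite list \<Rightarrow> 'b) \<Rightarrow> bool" where
  "val_computable F D n g \<longleftrightarrow> (\<forall>y. computable F D n (\<lambda>w. g w = y))"

lemma val_computable_mono:
  "val_computable F D n g \<Longrightarrow> F \<le> F' \<Longrightarrow> D \<le> D' \<Longrightarrow> val_computable F' D' n g"
  by (auto simp: val_computable_def intro: computable_mono)

lemma val_computable_cong:
  assumes "val_computable F D n g" "\<And>w. length w = n \<Longrightarrow> g w = g' w"
  shows "val_computable F D n g'"
  unfolding val_computable_def
proof
  fix y
  have "computable F D n (\<lambda>w. g w = y)"
    using assms(1) by (simp add: val_computable_def)
  then show "computable F D n (\<lambda>w. g' w = y)"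
    by (rule computable_cong) (simp add: assms(2))
qed

text \<open>Case distinction over the few possible values of \<open>g\<close>: one conjunction per value, joined by
  a disjunction.\<close>
lemma computable_bind:
  assumes "val_computable F D n g" "card (values_at n g) \<le> F"
    and "\<forall>y\<in>values_at n g. computable F D n (Q y)" "2 \<le> F"
  shows "computable F (Suc (Suc D)) n (\<lambda>w. Q (g w) w)"
proof -
  obtain ys where ys: "set ys = values_at n g" "distinct ys"
    using finite_distinct_list[OF finite_values_at[of n g]] by blast
  have "computable F (Suc D) n (\<lambda>w. g w = y \<and> Q y w)" if "y \<in> set ys" for y
    using assms(1,4) assms(3)[rule_format, of y] that ys(1)
    by (intro computable_conj) (simp_all add: val_computable_def)
  then have "\<forall>y\<in>set ys. computable F (Suc D) n (\<lambda>w. g w = y \<and> Q y w)"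
    by blast
  moreover have "length ys \<le> F"
    using assms(2) distinct_card[OF ys(2)] ys(1) by simp
  ultimately have "computable F (Suc (Suc D)) n (\<lambda>w. \<exists>y\<in>set ys. g w = y \<and> Q y w)"
    by (rule computable_Bex)
  then show ?thesis
    by (rule computable_cong) (use ys(1) values_atI[of _ n g] in blast)
qed

lemma computable_comp:
  assumes "val_computable F D n g" "card (values_at n g) \<le> F" "2 \<le> F"
  shows "computable F (D + 3) n (\<lambda>w. P (g w))"
proof -
  have "val_computable F (Suc D) n g"
    using assms(1) by (rule val_computable_mono) simp_all
  moreover have "\<forall>y\<in>values_at n g. computable F (Suc D) n (\<lambda>w. P y)"
    by (simp add: computable_const)
  ultimately show ?thesis
    using computable_bind[of F "Suc D" n g "\<lambda>y w. P y"] assms(2,3) by (simp add: eval_nat_numeral)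
qed

lemma val_computable_comp:
  assumes "val_computable F D n g" "card (values_at n g) \<le> F" "2 \<le> F"
  shows "val_computable F (D + 3) n (\<lambda>w. h (g w))"
  unfolding val_computable_def
proof
  fix y
  show "computable F (D + 3) n (\<lambda>w. h (g w) = y)"
    using computable_comp[OF assms, of "\<lambda>z. h z = y"] .
qed

definition positionwise_computable ::
    "nat \<Rightarrow> nat \<Rightarrow> nat \<Rightarrow> 'v set \<Rightarrow> ('a::finite list \<Rightarrow> 'v list) \<Rightarrow> bool" where
  "positionwise_computable F D n R vs \<longleftrightarrow>
     (\<forall>w. length w = n \<longrightarrow> length (vs w) = n \<and> set (vs w) \<subseteq> R)
     \<and> (\<forall>j<n. val_computable F D n (\<lambda>w. vs w ! j))"

lemma values_at_positionwise_subset: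
  assumes "positionwise_computable F D n R vs" "j < n"
  shows "values_at n (\<lambda>w. vs w ! j) \<subseteq> R"
proof
  fix v
  assume "v \<in> values_at n (\<lambda>w. vs w ! j)"
  then obtain w where w: "length w = n" "v = vs w ! j"
    by (auto simp: values_at_def)
  have "length (vs w) = n" "set (vs w) \<subseteq> R"
    using assms(1) w(1) by (simp_all add: positionwise_computable_def)
  then show "v \<in> R"
    using w(2) assms(2) nth_mem[of j "vs w"] by blast
qed

lemma sum_list_product:
  "(\<Sum>p\<leftarrow>List.product xs ys. f (fst p) (snd p)) = (\<Sum>x\<leftarrow>xs. \<Sum>y\<leftarrow>ys. f x y)"
  by (induction xs) (simp_all add: comp_def)

lemma sum_list_select:
  fixes f :: "'a \<Rightarrow> 'b::comm_monoid_add"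
  assumes "distinct ys" "x \<in> set ys"
  shows "(\<Sum>y\<leftarrow>ys. if x = y then f y else 0) = f x"
  using assms by (simp add: sum_list_distinct_conv_sum_set)

lemma computable_sum_list_eq:
  fixes a :: "'v \<Rightarrow> int"
  assumes vs: "positionwise_computable F D n R vs"
    and "finite R" "n * (\<Sum>t\<in>R. nat \<bar>a t\<bar>) \<le> F" "2 \<le> F"
  shows "computable F (D + 4) n (\<lambda>w. (\<Sum>v\<leftarrow>vs w. a v) = T)"
proof -
  obtain rs where rs: "set rs = R" "distinct rs"
    using finite_distinct_list[OF assms(2)] by blast
  define "is" where "is = List.product [0..<n] rs"
  have sum: "(\<Sum>p\<leftarrow>is. if vs w ! fst p = snd p then a (snd p) else 0) = (\<Sum>v\<leftarrow>vs w. a v)"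
    if w: "length w = n" for w
  proof -
    have len: "length (vs w) = n" and R: "set (vs w) \<subseteq> R"
      using vs w by (simp_all add: positionwise_computable_def)
    have select: "(\<Sum>t\<leftarrow>rs. if vs w ! j = t then a t else 0) = a (vs w ! j)" if "j \<in> set [0..<n]" for j
      using R rs len that by (intro sum_list_select) auto
    have "(\<Sum>p\<leftarrow>is. if vs w ! fst p = snd p then a (snd p) else 0)
        = (\<Sum>j\<leftarrow>[0..<n]. \<Sum>t\<leftarrow>rs. if vs w ! j = t then a t else 0)"
      using sum_list_product[of "\<lambda>j t. if vs w ! j = t then a t else 0" "[0..<n]" rs]
      by (simp add: is_def)
    also have "\<dots> = (\<Sum>j\<leftarrow>[0..<n]. a (vs w ! j))"
      using select by (intro arg_cong[where f = sum_list] map_cong) simp_all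
    also have "map (\<lambda>j. a (vs w ! j)) [0..<n] = map a (vs w)"
      by (rule nth_equalityI) (simp_all add: len)
    finally show ?thesis .
  qed
  have "\<forall>p\<in>set is. computable F D n (\<lambda>w. vs w ! fst p = snd p)"
    using vs by (auto simp: is_def positionwise_computable_def val_computable_def)
  moreover have "(\<Sum>p\<leftarrow>is. nat \<bar>a (snd p)\<bar>) \<le> F"
    using assms(3) rs sum_list_product[of "\<lambda>j t. nat \<bar>a t\<bar>" "[0..<n]" rs]
    by (simp add: is_def sum_list_triv sum_list_distinct_conv_sum_set)
  ultimately have "computable F (D + 4) n
      (\<lambda>w. (\<Sum>p\<leftarrow>is. if vs w ! fst p = snd p then a (snd p) else 0) = T)"
    using assms(4) by (rule computable_weighted_eq)
  then show ?thesis
    by (rule computable_cong) (simp add: sum)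
qed

lemma int_length_filter: "int (length (filter P xs)) = (\<Sum>x\<leftarrow>xs. if P x then 1 else 0)"
  by (induction xs) auto

lemma computable_count_eq:
  assumes "positionwise_computable F D n R vs" "finite R" "n * card R \<le> F" "2 \<le> F"
  shows "computable F (D + 4) n (\<lambda>w. length (filter P (vs w)) = c)"
proof -
  have "(\<Sum>t\<in>R. nat \<bar>if P t then 1 else 0 :: int\<bar>) \<le> card R"
    using sum_mono[of R "\<lambda>t. nat \<bar>if P t then 1 else 0 :: int\<bar>" "\<lambda>_. 1"] by simp
  then have "n * (\<Sum>t\<in>R. nat \<bar>if P t then 1 else 0 :: int\<bar>) \<le> F"
    using assms(3) mult_le_mono2 order_trans by blast
  from computable_sum_list_eq[OF assms(1,2) this assms(4), of "int c"]
  show ?thesis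
    by (rule computable_cong) (simp flip: int_length_filter)
qed

lemma computable_list_all:
  assumes "positionwise_computable F D n R vs" "finite R" "n * card R \<le> F" "2 \<le> F"
  shows "computable F (D + 4) n (\<lambda>w. \<forall>v\<in>set (vs w). P v)"
  using computable_count_eq[OF assms, where P = "\<lambda>v. \<not> P v" and c = 0]
  by (rule computable_cong) (simp add: filter_empty_conv)

lemma computable_list_ex:
  assumes "positionwise_computable F D n R vs" "finite R" "n * card R \<le> F" "2 \<le> F"
  shows "computable F (D + 5) n (\<lambda>w. \<exists>v\<in>set (vs w). P v)"
proof -
  have "computable F (Suc (D + 4)) n (\<lambda>w. \<not> length (filter P (vs w)) = 0)"
    using computable_not[OF computable_count_eq[OF assms, where P = P and c = 0]] assms(4) by simp
  then have "computable F (D + 5) n (\<lambda>w. \<not> length (filter P (vs w)) = 0)"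
    by (rule computable_mono) simp_all
  then show ?thesis
    by (rule computable_cong) (simp add: filter_empty_conv)
qed

lemma computable_scaled_sum_list_eq:
  fixes a :: "'v \<Rightarrow> int" and \<alpha> q :: rat
  assumes "positionwise_computable F D n R vs" "finite R" "n * (\<Sum>t\<in>R. nat \<bar>a t\<bar>) \<le> F" "2 \<le> F"
  shows "computable F (D + 4) n (\<lambda>w. \<alpha> * of_int (\<Sum>v\<leftarrow>vs w. a v) = q)"
proof (cases "\<alpha> \<noteq> 0 \<and> of_int \<lfloor>q / \<alpha>\<rfloor> = q / \<alpha>")
  case True
  have "\<alpha> * of_int z = q \<longleftrightarrow> z = \<lfloor>q / \<alpha>\<rfloor>" for z :: int
  proof -
    have "\<alpha> * of_int z = q \<longleftrightarrow> of_int z = q / \<alpha>"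
      using True by (auto simp: field_simps)
    also have "\<dots> \<longleftrightarrow> z = \<lfloor>q / \<alpha>\<rfloor>"
      using True by (metis floor_of_int of_int_eq_iff)
    finally show ?thesis .
  qed
  with computable_sum_list_eq[OF assms, of "\<lfloor>q / \<alpha>\<rfloor>"] show ?thesis
    by (simp add: computable_cong)
next
  case False
  \<comment> \<open>Then the equation does not depend on the input.\<close>
  have "\<alpha> * of_int z = q \<longleftrightarrow> \<alpha> = 0 \<and> q = 0" for z :: int
  proof (cases "\<alpha> = 0")
    case False
    have "\<alpha> * of_int z \<noteq> q"
    proof
      assume "\<alpha> * of_int z = q"
      then have "q / \<alpha> = of_int z"
        using False by (auto simp: field_simps)
      then show False
        using \<open>\<not> (\<alpha> \<noteq> 0 \<and> of_int \<lfloor>q / \<alpha>\<rfloor> = q / \<alpha>)\<close> False by simp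
    qed
    then show ?thesis
      using False by simp
  qed auto
  then show ?thesis
    using computable_const[of "D + 4" F n "\<alpha> = 0 \<and> q = 0"] by (simp add: computable_cong)
qed

lemma poly_power_bound:
  fixes F c D n m :: nat
  defines "e \<equiv> (c + 1) ^ D + c * D"
  assumes "F \<le> c * (n + 1) ^ c" "n \<le> m"
  shows "(F + 1) ^ D \<le> e * (m + 1) ^ e"
proof -
  have "1 \<le> (n + 1) ^ c"
    by simp
  then have "F + 1 \<le> c * (n + 1) ^ c + (n + 1) ^ c"
    using assms(2) by linarith
  then have "F + 1 \<le> (c + 1) * (n + 1) ^ c"
    by (simp add: distrib_right)
  also have "\<dots> \<le> (c + 1) * (m + 1) ^ c"
    using assms(3) by (intro mult_le_mono2 power_mono) simp_all
  finally have "(F + 1) ^ D \<le> ((c + 1) * (m + 1) ^ c) ^ D"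
    by (rule power_mono) simp
  also have "\<dots> = (c + 1) ^ D * (m + 1) ^ (c * D)"
    by (simp only: power_mult_distrib power_mult)
  also have "\<dots> \<le> e * (m + 1) ^ e"
    by (intro mult_le_mono power_increasing) (simp_all add: e_def)
  finally show ?thesis .
qed

text \<open>The circuit for inputs of length \<open>m\<close> is the one for words of length \<open>m div |\<Sigma>|\<close>.\<close>
lemma TC0_if_computable:
  fixes Lang :: "'a::finite list set"
  assumes computable: "\<And>n. computable (F n) D n (\<lambda>w. w \<in> Lang)"
    and poly: "\<And>n. F n \<le> c * (n + 1) ^ c"
  shows "Lang \<in> TC0"
proof -
  have "\<forall>n. \<exists>C. computes (F n) D n (\<lambda>w. w \<in> Lang) C"
    using computable by (simp add: computable_def)
  from choice[OF this] obtain C where C: "\<And>n. computes (F n) D n (\<lambda>w. w \<in> Lang) (C n)"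
    by blast
  define K where "K = card (UNIV :: 'a set)"
  have K: "0 < K"
    by (simp add: K_def finite_UNIV_card_ge_0)
  define e where "e = (c + 1) ^ D + c * D"
  have "csize (C (m div K)) \<le> e * (m + 1) ^ e" for m
  proof -
    have "csize (C (m div K)) \<le> (F (m div K) + 1) ^ cdepth (C (m div K))"
      using C csize_le_fanin_pow_depth by (simp add: computes_def)
    also have "\<dots> \<le> (F (m div K) + 1) ^ D"
      using C by (intro power_increasing) (simp_all add: computes_def)
    also have "\<dots> \<le> e * (m + 1) ^ e"
      unfolding e_def using poly by (rule poly_power_bound) (simp add: div_le_dividend)
    finally show ?thesis .
  qed
  moreover have "ceval (encode_word w) (C (length w * K div K)) \<longleftrightarrow> w \<in> Lang" for w :: "'a list"
    using C[of "length w"] K by (simp add: computes_def)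
  ultimately show ?thesis
    unfolding TC0_def using C
    by (intro CollectI exI[of _ "\<lambda>m. C (m div K)"] exI[of _ D] exI[of _ e])
      (simp_all add: computes_def K_def)
qed

section \<open>Circuits for a saturated attention head\<close>

lemma Max_insert_0_eq_iff:
  "finite S \<Longrightarrow> Max (insert 0 S) = (e::nat) \<longleftrightarrow> (\<forall>x\<in>S. x \<le> e) \<and> (e = 0 \<or> e \<in> S)"
  by (auto simp: Max_eq_iff)

lemma sum_list_of_int_divide:
  "(\<Sum>x\<leftarrow>xs. of_int (f x) / d) = of_int (\<Sum>x\<leftarrow>xs. f x) / (d :: 'a::field_char_0)"
  by (induction xs) (simp_all add: add_divide_distrib)

context
  fixes F D n B k :: nat and vs :: "'a::finite list \<Rightarrow> fl list list"
  assumes vs: "positionwise_computable F D n (small_vecs k B) vs"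
    and n: "1 \<le> n"
    and fanin: "2 \<le> F" "k \<le> F" "n + 1 \<le> F" "n * card (small_vecs k B) * 4 ^ B \<le> F"
begin

lemma vs_small: "length w = n \<Longrightarrow> length (vs w) = n \<and> set (vs w) \<subseteq> small_vecs k B"
  using vs by (simp add: positionwise_computable_def)

lemma n_mult_card_small_vecs_le_fanin: "n * card (small_vecs k B) \<le> F"
proof -
  have "n * card (small_vecs k B) * 1 \<le> n * card (small_vecs k B) * 4 ^ B"
    by (intro mult_le_mono2) simp
  then show ?thesis
    using fanin(4) by linarith
qed

lemma card_small_vecs_le_fanin: "card (small_vecs k B) \<le> F"
proof -
  have "1 * card (small_vecs k B) \<le> n * card (small_vecs k B)"
    using n by (intro mult_le_mono1)
  then show ?thesis
    using n_mult_card_small_vecs_le_fanin by linarith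
qed

lemma val_computable_attn_max: "val_computable F (D + 6) n (\<lambda>w. attn_max g (vs w))"
  unfolding val_computable_def
proof
  fix r
  have "computable F (D + 5) n (\<lambda>w. \<forall>v\<in>set (vs w). g v \<le> r)"
    using computable_list_all[OF vs finite_small_vecs n_mult_card_small_vecs_le_fanin fanin(1)]
    by (rule computable_mono) simp_all
  moreover have "computable F (D + 5) n (\<lambda>w. \<exists>v\<in>set (vs w). g v = r)"
    using computable_list_ex[OF vs finite_small_vecs n_mult_card_small_vecs_le_fanin fanin(1)] .
  ultimately have "computable F (Suc (D + 5)) n (\<lambda>w. (\<forall>v\<in>set (vs w). g v \<le> r) \<and> (\<exists>v\<in>set (vs w). g v = r))"
    using fanin(1) by (rule computable_conj)
  then have "computable F (D + 6) n (\<lambda>w. (\<forall>v\<in>set (vs w). g v \<le> r) \<and> (\<exists>v\<in>set (vs w). g v = r))"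
    by (rule computable_mono) simp_all
  then show "computable F (D + 6) n (\<lambda>w. attn_max g (vs w) = r)"
  proof (rule computable_cong)
    fix w :: "'a list"
    assume "length w = n"
    then have "vs w \<noteq> []"
      using vs_small[of w] n by auto
    then show "((\<forall>v\<in>set (vs w). g v \<le> r) \<and> (\<exists>v\<in>set (vs w). g v = r)) = (attn_max g (vs w) = r)"
      by (auto simp: attn_max_def Max_eq_iff)
  qed
qed

lemma card_values_attn_max: "card (values_at n (\<lambda>w. attn_max g (vs w))) \<le> F"
proof -
  have "values_at n (\<lambda>w. attn_max g (vs w)) \<subseteq> g ` small_vecs k B"
  proof
    fix r
    assume "r \<in> values_at n (\<lambda>w. attn_max g (vs w))"
    then obtain w where w: "length w = n" "r = attn_max g (vs w)"
      by (auto simp: values_at_def)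
    then have "vs w \<noteq> []"
      using vs_small[of w] n by auto
    then have "r \<in> g ` set (vs w)"
      by (simp add: w(2) attn_max_def)
    then show "r \<in> g ` small_vecs k B"
      using image_mono[of "set (vs w)" "small_vecs k B" g] vs_small[OF w(1)] by blast
  qed
  then have "card (values_at n (\<lambda>w. attn_max g (vs w))) \<le> card (g ` small_vecs k B)"
    by (intro card_mono) (simp_all add: finite_small_vecs)
  also have "\<dots> \<le> card (small_vecs k B)"
    by (rule card_image_le[OF finite_small_vecs])
  finally show ?thesis
    using card_small_vecs_le_fanin by linarith
qed

lemma val_computable_attn_count: "val_computable F (D + 4) n (\<lambda>w. attn_count g r (vs w))"
  using computable_count_eq[OF vs finite_small_vecs n_mult_card_small_vecs_le_fanin fanin(1)]
  by (simp add: val_computable_def attn_count_def)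

lemma card_values_attn_count: "card (values_at n (\<lambda>w. attn_count g r (vs w))) \<le> F"
proof -
  have "values_at n (\<lambda>w. attn_count g r (vs w)) \<subseteq> {..n}"
    using vs_small by (auto simp: values_at_def attn_count_def intro: order_trans[OF length_filter_le])
  then have "card (values_at n (\<lambda>w. attn_count g r (vs w))) \<le> card {..n}"
    by (rule card_mono[OF finite_atMost])
  then show ?thesis
    using fanin(3) by simp
qed

lemma computable_attn_exp_eq: "computable F (D + 7) n (\<lambda>w. attn_exp g r m c (vs w) = e)"
proof -
  define E where "E = (\<lambda>v. (if g v = r then bitlen m else 0) + fl_exp (v ! c))"
  have "computable F (D + 6) n (\<lambda>w. \<forall>v\<in>set (vs w). E v \<le> e)"
    using computable_list_all[OF vs finite_small_vecs n_mult_card_small_vecs_le_fanin fanin(1)]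
    by (rule computable_mono) simp_all
  moreover have "computable F (D + 6) n (\<lambda>w. e = 0 \<or> (\<exists>v\<in>set (vs w). e = E v))"
    using computable_disj[OF computable_const[of "D + 5"]
        computable_list_ex[OF vs finite_small_vecs n_mult_card_small_vecs_le_fanin fanin(1)] fanin(1)]
    by (simp add: eval_nat_numeral)
  ultimately have "computable F (Suc (D + 6)) n
      (\<lambda>w. (\<forall>v\<in>set (vs w). E v \<le> e) \<and> (e = 0 \<or> (\<exists>v\<in>set (vs w). e = E v)))"
    using fanin(1) by (rule computable_conj)
  then have "computable F (D + 7) n
      (\<lambda>w. (\<forall>v\<in>set (vs w). E v \<le> e) \<and> (e = 0 \<or> (\<exists>v\<in>set (vs w). e = E v)))"
    by (rule computable_mono) simp_all
  moreover have "attn_exp g r m c vs' = Max (insert 0 (E ` set vs'))" for vs'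
    by (simp add: attn_exp_def E_def)
  ultimately show ?thesis
    by (simp add: computable_cong Max_insert_0_eq_iff image_iff)
qed

lemma computable_attn_val_eq:
  assumes c: "c < k"
  shows "computable F (D + 4) n (\<lambda>w. attn_val g r m c (vs w) = q)"
proof -
  define a where "a v = (if g v = r then fl_int (v ! c) * 2 ^ (B - fl_exp (v ! c)) else 0)" for v
  have a: "(if g v = r then fl_val (v ! c) else 0) = of_int (a v) / 2 ^ B" if "v \<in> small_vecs k B" for v
    using small_vecs_nth_size[OF that c] fl_exp_less_size[of "v ! c"] fl_val_scaled[of "v ! c" B]
    by (simp add: a_def)
  have "nat \<bar>a t\<bar> \<le> 4 ^ B" if "t \<in> small_vecs k B" for t
    using abs_fl_int_scaled_le[OF small_vecs_nth_size[OF that c]] by (simp add: a_def)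
  then have "(\<Sum>t\<in>small_vecs k B. nat \<bar>a t\<bar>) \<le> card (small_vecs k B) * 4 ^ B"
    using sum_bounded_above[of "small_vecs k B" "\<lambda>t. nat \<bar>a t\<bar>" "4 ^ B"] by simp
  then have "n * (\<Sum>t\<in>small_vecs k B. nat \<bar>a t\<bar>) \<le> n * (card (small_vecs k B) * 4 ^ B)"
    by (rule mult_le_mono2)
  moreover have "n * (card (small_vecs k B) * 4 ^ B) \<le> F"
    using fanin(4) by (simp add: mult.assoc)
  ultimately have "n * (\<Sum>t\<in>small_vecs k B. nat \<bar>a t\<bar>) \<le> F"
    by (rule order_trans)
  then have "computable F (D + 4) n
      (\<lambda>w. fl_val (fl_inv_nat m) / 2 ^ B * of_int (\<Sum>v\<leftarrow>vs w. a v) = q)"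
    using computable_scaled_sum_list_eq[OF vs finite_small_vecs _ fanin(1)] by blast
  then show ?thesis
  proof (rule computable_cong)
    fix w :: "'a list"
    assume "length w = n"
    then have "(\<Sum>v\<leftarrow>vs w. if g v = r then fl_val (v ! c) else 0) = (\<Sum>v\<leftarrow>vs w. of_int (a v) / 2 ^ B)"
      using vs_small by (intro arg_cong[where f = sum_list] map_cong refl a) blast
    also have "\<dots> = of_int (\<Sum>v\<leftarrow>vs w. a v) / 2 ^ B"
      by (rule sum_list_of_int_divide)
    finally show "(fl_val (fl_inv_nat m) / 2 ^ B * of_int (\<Sum>v\<leftarrow>vs w. a v) = q)
        = (attn_val g r m c (vs w) = q)"
      by (simp add: attn_val_def)
  qed
qed

lemma computable_attn_output: "computable F (D + 11) n (\<lambda>w. attn_output k g r m (vs w) y)"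
proof -
  have coordinate: "computable F (D + 9) n (\<lambda>w. fl_normal (y ! c)
      \<and> fl_exp (y ! c) = attn_exp g r m c (vs w) \<and> fl_val (y ! c) = attn_val g r m c (vs w))"
    if "c \<in> set [0..<k]" for c
  proof -
    have val: "computable F (D + 7) n (\<lambda>w. attn_val g r m c (vs w) = fl_val (y ! c))"
      using that by (intro computable_mono[OF computable_attn_val_eq]) simp_all
    have exp_val: "computable F (Suc (D + 7)) n (\<lambda>w. attn_exp g r m c (vs w) = fl_exp (y ! c)
        \<and> attn_val g r m c (vs w) = fl_val (y ! c))"
      using computable_attn_exp_eq val fanin(1) by (rule computable_conj)
    have "computable F (Suc (Suc (D + 7))) n (\<lambda>w. fl_normal (y ! c)
        \<and> (attn_exp g r m c (vs w) = fl_exp (y ! c) \<and> attn_val g r m c (vs w) = fl_val (y ! c)))"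
      by (rule computable_conj[OF computable_const exp_val fanin(1)]) simp
    then show ?thesis
      by (rule computable_mono[THEN computable_cong]) auto
  qed
  have "\<forall>c\<in>set [0..<k]. computable F (D + 9) n (\<lambda>w. fl_normal (y ! c)
      \<and> fl_exp (y ! c) = attn_exp g r m c (vs w) \<and> fl_val (y ! c) = attn_val g r m c (vs w))"
    using coordinate by blast
  from computable_Ball[OF this] fanin(2)
  have coordinates: "computable F (Suc (D + 9)) n (\<lambda>w. \<forall>c\<in>set [0..<k]. fl_normal (y ! c)
      \<and> fl_exp (y ! c) = attn_exp g r m c (vs w) \<and> fl_val (y ! c) = attn_val g r m c (vs w))"
    by simp
  have "computable F (Suc (Suc (D + 9))) n (\<lambda>w. length y = k \<and> (\<forall>c\<in>set [0..<k]. fl_normal (y ! c)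
      \<and> fl_exp (y ! c) = attn_exp g r m c (vs w) \<and> fl_val (y ! c) = attn_val g r m c (vs w)))"
    by (rule computable_conj[OF computable_const coordinates fanin(1)]) simp
  then show ?thesis
    by (rule computable_mono[THEN computable_cong]) (auto simp: attn_output_def)
qed

text \<open>The maximal score and the number of positions attaining it have few possible values; fixing
  both, the output of the head is determined coordinatewise by threshold conditions.\<close>
lemma val_computable_weighted_sum_sat_attn:
  "val_computable F (D + 15) n (\<lambda>w. weighted_sum k (sat_attn (map sc (vs w))) (vs w))"
  unfolding val_computable_def
proof
  fix y
  define g where "g = fl_val \<circ> sc"
  have count: "computable F (D + 13) n (\<lambda>w. attn_output k g r (attn_count g r (vs w)) (vs w) y)" for r
  proof -
    have "val_computable F (D + 11) n (\<lambda>w. attn_count g r (vs w))"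
      using val_computable_attn_count by (rule val_computable_mono) simp_all
    then have "computable F (Suc (Suc (D + 11))) n (\<lambda>w. attn_output k g r (attn_count g r (vs w)) (vs w) y)"
      using card_values_attn_count computable_attn_output fanin(1)
      by (intro computable_bind[where Q = "\<lambda>m w. attn_output k g r m (vs w) y"]) simp_all
    then show ?thesis
      by (simp add: eval_nat_numeral)
  qed
  have "val_computable F (D + 13) n (\<lambda>w. attn_max g (vs w))"
    using val_computable_attn_max by (rule val_computable_mono) simp_all
  then have "computable F (Suc (Suc (D + 13))) n
      (\<lambda>w. attn_output k g (attn_max g (vs w)) (attn_count g (attn_max g (vs w)) (vs w)) (vs w) y)"
    using card_values_attn_max count fanin(1)
    by (intro computable_bind[where Q = "\<lambda>r w. attn_output k g r (attn_count g r (vs w)) (vs w) y"]) simp_all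
  then show "computable F (D + 15) n (\<lambda>w. weighted_sum k (sat_attn (map sc (vs w))) (vs w) = y)"
  proof (rule computable_mono[THEN computable_cong])
    fix w :: "'a list"
    assume "length w = n"
    then have "\<forall>v\<in>set (vs w). length v = k"
      using vs_small by (auto simp: small_vecs_def)
    then show "attn_output k g (attn_max g (vs w)) (attn_count g (attn_max g (vs w)) (vs w)) (vs w) y
        = (weighted_sum k (sat_attn (map sc (vs w))) (vs w) = y)"
      by (simp add: weighted_sum_sat_attn_eq_iff g_def)
  qed simp_all
qed

end

section \<open>Transformers\<close>

lemma emb_size_preserving_affine:
  fixes \<phi> :: "'a::finite \<Rightarrow> nat \<Rightarrow> fl list"
  assumes "emb_size_preserving \<phi>"
  obtains c C where "\<And>\<sigma> i. vec_size (\<phi> \<sigma> i) \<le> c * bitlen i + C"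
proof -
  obtain c N where cN: "\<And>\<sigma> i. N \<le> bitlen i \<Longrightarrow> vec_size (\<phi> \<sigma> i) \<le> c * bitlen i"
    using assms by (auto simp: emb_size_preserving_def)
  define C where "C = Max ((\<lambda>(\<sigma>, i). vec_size (\<phi> \<sigma> i)) ` (UNIV \<times> {..<2 ^ N}))"
  have "vec_size (\<phi> \<sigma> i) \<le> c * bitlen i + C" for \<sigma> i
  proof (cases "N \<le> bitlen i")
    case True
    then show ?thesis
      using cN by (simp add: trans_le_add1)
  next
    case False
    have "i < 2 ^ bitlen i"
      by (rule less_two_pow_bitlen)
    also have "\<dots> \<le> 2 ^ N"
      using False by (intro power_increasing) auto
    finally have "vec_size (\<phi> \<sigma> i) \<le> C"
      unfolding C_def by (intro Max_ge) force+
    then show ?thesis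
      by (simp add: trans_le_add2)
  qed
  then show ?thesis
    using that by blast
qed

lemma finite_small_act_domain: "finite {xs \<in> act_domain k H. vecs_size xs < N}"
proof (rule finite_subset)
  show "{xs \<in> act_domain k H. vecs_size xs < N} \<subseteq> {xs. set xs \<subseteq> small_vecs k N \<and> length xs = H + 1}"
    using vec_size_le_vecs_size by (fastforce simp: act_domain_def intro: small_vecsI)
  show "finite {xs. set xs \<subseteq> small_vecs k N \<and> length xs = H + 1}"
    by (rule finite_lists_length_eq[OF finite_small_vecs])
qed

lemma act_size_preserving_affine:
  assumes "act_size_preserving k H g"
  obtains c C where "\<And>xs. xs \<in> act_domain k H \<Longrightarrow> vec_size (g xs) \<le> c * vecs_size xs + C"
proof -
  obtain c N where cN: "\<And>xs. xs \<in> act_domain k H \<Longrightarrow> N \<le> vecs_size xs \<Longrightarrow> vec_size (g xs) \<le> c * vecs_size xs"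
    using assms by (auto simp: act_size_preserving_def)
  define C where "C = Max ((\<lambda>xs. vec_size (g xs)) ` {xs \<in> act_domain k H. vecs_size xs < N})"
  have "vec_size (g xs) \<le> c * vecs_size xs + C" if "xs \<in> act_domain k H" for xs
  proof (cases "N \<le> vecs_size xs")
    case True
    then show ?thesis
      using cN that by (simp add: trans_le_add1)
  next
    case False
    then have "vec_size (g xs) \<le> C"
      unfolding C_def using that by (intro Max_ge finite_imageI finite_small_act_domain) auto
    then show ?thesis
      by (simp add: trans_le_add2)
  qed
  then show ?thesis
    using that by blast
qed

lemma power_of_eight: "(8::nat) ^ (A * b * k) = (2 ^ b) ^ (3 * A * k)"
proof -
  have "(8::nat) ^ (A * b * k) = (2 ^ 3) ^ (A * b * k)"
    by simp
  also have "\<dots> = (2 ^ b) ^ (3 * A * k)"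
    by (simp only: power_mult[symmetric] mult_ac)
  finally show ?thesis .
qed

lemma power_of_four: "(4::nat) ^ (A * b) = (2 ^ b) ^ (2 * A)"
proof -
  have "(4::nat) ^ (A * b) = (2 ^ 2) ^ (A * b)"
    by simp
  also have "\<dots> = (2 ^ b) ^ (2 * A)"
    by (simp only: power_mult[symmetric] mult_ac)
  finally show ?thesis .
qed

text \<open>With vectors of \<open>A * bitlen n\<close> bits, every fan-in needed below is a power of
  \<open>2 ^ bitlen n \<le> 2 * (n + 1)\<close> with an exponent independent of \<open>n\<close>.\<close>
lemma fanin_bounds:
  fixes A k H K n :: nat
  defines "G \<equiv> 2 ^ bitlen n" and "B \<equiv> A * bitlen n" and "Z \<equiv> 1 + 3 * A * k * (H + 1) + 2 * A"
  assumes K: "1 \<le> K"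
  shows "n + 1 \<le> K * G ^ Z"
    and "card (small_vecs k B) ^ H \<le> K * G ^ Z"
    and "n * card (small_vecs k B) * 4 ^ B \<le> K * G ^ Z"
proof -
  have G: "2 \<le> G"
    using power_increasing[OF bitlen_ge_1[of n], of "2::nat"] by (simp add: G_def)
  have pow: "G ^ a \<le> K * G ^ Z" if "a \<le> Z" for a
  proof -
    have "G ^ a \<le> G ^ Z"
      using G that by (intro power_increasing) simp_all
    also have "\<dots> \<le> K * G ^ Z"
      using K by simp
    finally show ?thesis .
  qed
  have card: "card (small_vecs k B) \<le> G ^ (3 * A * k)"
    using card_small_vecs[of k B] power_of_eight[of A "bitlen n" k] by (simp add: G_def B_def)
  have "n + 1 \<le> G ^ 1"
    using less_two_pow_bitlen[of n] by (simp add: G_def)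
  also have "\<dots> \<le> K * G ^ Z"
    by (rule pow) (simp add: Z_def)
  finally show "n + 1 \<le> K * G ^ Z" .
  have "card (small_vecs k B) ^ H \<le> (G ^ (3 * A * k)) ^ H"
    using card by (rule power_mono) simp
  also have "\<dots> = G ^ (3 * A * k * H)"
    by (simp add: power_mult)
  also have "\<dots> \<le> K * G ^ Z"
    by (rule pow) (simp add: Z_def algebra_simps)
  finally show "card (small_vecs k B) ^ H \<le> K * G ^ Z" .
  have "n * card (small_vecs k B) * 4 ^ B \<le> G ^ 1 * G ^ (3 * A * k) * G ^ (2 * A)"
    using less_two_pow_bitlen[of n] card power_of_four[of A "bitlen n"]
    by (intro mult_le_mono) (simp_all add: G_def B_def)
  also have "\<dots> = G ^ (1 + 3 * A * k + 2 * A)"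
    by (simp add: power_add)
  also have "\<dots> \<le> K * G ^ Z"
    by (rule pow) (simp add: Z_def algebra_simps)
  finally show "n * card (small_vecs k B) * 4 ^ B \<le> K * G ^ Z" .
qed

lemma fanin_polynomial:
  "K * (2 ^ bitlen n) ^ Z \<le> (K * 2 ^ Z + Z) * (n + 1) ^ (K * 2 ^ Z + Z)"
proof -
  have "K * (2 ^ bitlen n) ^ Z \<le> K * (2 * (n + 1)) ^ Z"
    using two_pow_bitlen_le[of n] by (intro mult_le_mono2 power_mono) simp_all
  also have "\<dots> = (K * 2 ^ Z) * (n + 1) ^ Z"
    by (simp only: power_mult_distrib mult.assoc)
  also have "\<dots> \<le> (K * 2 ^ Z + Z) * (n + 1) ^ (K * 2 ^ Z + Z)"
    by (intro mult_le_mono power_increasing) simp_all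
  finally show ?thesis .
qed

declare tf_run.simps [simp del]

locale saturated_transformer =
  fixes k H nL :: nat
    and \<phi> :: "'a::finite \<Rightarrow> nat \<Rightarrow> fl list"
    and s :: "nat \<Rightarrow> nat \<Rightarrow> fl list \<Rightarrow> fl list \<Rightarrow> fl"
    and f :: "nat \<Rightarrow> fl list list \<Rightarrow> fl list"
  assumes length_embedding: "\<And>\<sigma> i. length (\<phi> \<sigma> i) = k"
    and embedding_size: "emb_size_preserving \<phi>"
    and length_activation: "\<And>l xs. l \<in> {1..nL} \<Longrightarrow> xs \<in> act_domain k H \<Longrightarrow> length (f l xs) = k"
    and activation_size: "\<And>l. l \<in> {1..nL} \<Longrightarrow> act_size_preserving k H (f l)"
begin

abbreviation run :: "'a list \<Rightarrow> nat \<Rightarrow> fl list list" where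
  "run w l \<equiv> tf_run k H \<phi> s f w l"

definition attention :: "'a list \<Rightarrow> nat \<Rightarrow> nat \<Rightarrow> fl list \<Rightarrow> fl list" where
  "attention w l h x = weighted_sum k (sat_attn (map (s l h x) (run w l))) (run w l)"

lemma length_run [simp]: "length (run w l) = length w"
  by (induction l) (simp_all add: tf_run.simps tf_layer_def not_less_eq_eq)

lemma run_0_nth: "i < length w \<Longrightarrow> run w 0 ! i = \<phi> (w ! i) (Suc i)"
  by (simp add: tf_run.simps nth_upt del: upt_Suc)

lemma run_Suc_nth: "i < length w \<Longrightarrow>
    run w (Suc l) ! i = f (Suc l) (run w l ! i # map (\<lambda>h. attention w l h (run w l ! i)) [0..<H])"
  by (simp add: tf_run.simps tf_layer_def attention_def)

lemma length_run_nth: "l \<le> nL \<Longrightarrow> i < length w \<Longrightarrow> length (run w l ! i) = k"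
proof (induction l arbitrary: i)
  case 0
  then show ?case
    by (simp add: run_0_nth length_embedding)
next
  case (Suc l)
  have "\<forall>v\<in>set (run w l). length v = k"
    using Suc by (auto simp: in_set_conv_nth)
  then have "run w l ! i # map (\<lambda>h. attention w l h (run w l ! i)) [0..<H] \<in> act_domain k H"
    using Suc weighted_sum_nth(1) by (auto simp: act_domain_def attention_def)
  then show ?case
    unfolding run_Suc_nth[OF Suc.prems(2)] using Suc.prems(1) by (simp add: length_activation)
qed

lemma length_run_elem: "l \<le> nL \<Longrightarrow> v \<in> set (run w l) \<Longrightarrow> length v = k"
  by (auto simp: in_set_conv_nth length_run_nth)

lemma length_attention: "l \<le> nL \<Longrightarrow> length (attention w l h x) = k"
  unfolding attention_def using length_run_elem by (intro weighted_sum_nth(1)) blast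

lemma attention_size:
  assumes "l \<le> nL" "\<forall>v\<in>set (run w l). vec_size v \<le> B"
  shows "vec_size (attention w l h x) \<le> k * (2 + 3 * bitlen (length w) + 3 * B)"
proof -
  have "\<forall>v\<in>set (run w l). length v = k \<and> (\<forall>x\<in>set v. fl_size x \<le> B)"
    using assms length_run_elem fl_size_le_vec_size order_trans by blast
  then have "fl_size y \<le> 2 + 3 * bitlen (length w) + 3 * B" if "y \<in> set (attention w l h x)" for y
    using that weighted_sum_sat_attn_size[of "run w l" k B] length_attention[OF assms(1)]
    by (auto simp: in_set_conv_nth attention_def)
  then show ?thesis
    using vec_size_le_length_mult length_attention[OF assms(1)] by metis
qed

lemma attention_size_linear:
  assumes "l \<le> nL" "\<forall>v\<in>set (run w l). vec_size v \<le> A * bitlen (length w)"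
  shows "vec_size (attention w l h x) \<le> k * (5 + 3 * A) * bitlen (length w)"
proof -
  let ?\<beta> = "bitlen (length w)"
  have "2 + 3 * ?\<beta> + 3 * (A * ?\<beta>) \<le> (5 + 3 * A) * ?\<beta>"
    using bitlen_ge_1[of "length w"] by (simp add: algebra_simps)
  then have "k * (2 + 3 * ?\<beta> + 3 * (A * ?\<beta>)) \<le> k * ((5 + 3 * A) * ?\<beta>)"
    by (rule mult_le_mono2)
  then show ?thesis
    using attention_size[OF assms, where h = h and x = x] by (simp only: mult.assoc)
qed

lemma activation_input_in_domain:
  "l < nL \<Longrightarrow> i < length w \<Longrightarrow>
    run w l ! i # map (\<lambda>h. attention w l h (run w l ! i)) [0..<H] \<in> act_domain k H"
  by (auto simp: act_domain_def length_run_nth length_attention)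

lemma run_0_size_bound: "\<exists>A. \<forall>w. \<forall>v\<in>set (run w 0). vec_size v \<le> A * bitlen (length w)"
proof -
  obtain c C where cC: "\<And>\<sigma> i. vec_size (\<phi> \<sigma> i) \<le> c * bitlen i + C"
    using emb_size_preserving_affine[OF embedding_size] by blast
  have "vec_size v \<le> (c + C) * bitlen (length w)" if "v \<in> set (run w 0)" for w v
  proof -
    obtain i where i: "i < length (run w 0)" "run w 0 ! i = v"
      using \<open>v \<in> set (run w 0)\<close> by (meson in_set_conv_nth)
    then have "i < length w"
      by (simp only: length_run)
    then have v: "v = \<phi> (w ! i) (Suc i)"
      using i(2) by (simp only: run_0_nth)
    have "c * bitlen (Suc i) \<le> c * bitlen (length w)"
      using \<open>i < length w\<close> by (intro mult_le_mono2 bitlen_mono) simp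
    moreover have "C \<le> C * bitlen (length w)"
      using bitlen_ge_1[of "length w"] by simp
    ultimately show ?thesis
      using cC[of "w ! i" "Suc i"] unfolding v add_mult_distrib by linarith
  qed
  then show ?thesis
    by blast
qed

lemma vecs_size_activation_input:
  assumes "l < nL" "i < length w" "\<forall>v\<in>set (run w l). vec_size v \<le> A * bitlen (length w)"
  shows "vecs_size (run w l ! i # map (\<lambda>h. attention w l h (run w l ! i)) [0..<H])
    \<le> (A + H * (k * (5 + 3 * A))) * bitlen (length w)"
proof -
  let ?\<beta> = "bitlen (length w)"
  have "(\<Sum>h\<leftarrow>[0..<H]. vec_size (attention w l h (run w l ! i))) \<le> H * (k * (5 + 3 * A) * ?\<beta>)"
    using sum_list_mono[of "[0..<H]" "\<lambda>h. vec_size (attention w l h (run w l ! i))"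
        "\<lambda>_. k * (5 + 3 * A) * ?\<beta>"] attention_size_linear[of l w A] assms
    by (simp add: sum_list_triv)
  moreover have "vec_size (run w l ! i) \<le> A * ?\<beta>"
    using assms(2,3) by simp
  ultimately show ?thesis
    by (simp add: vecs_size_def comp_def algebra_simps)
qed

lemma run_Suc_size_bound:
  assumes "l < nL" and A: "\<forall>w. \<forall>v\<in>set (run w l). vec_size v \<le> A * bitlen (length w)"
  shows "\<exists>A'. \<forall>w. \<forall>v\<in>set (run w (Suc l)). vec_size v \<le> A' * bitlen (length w)"
proof -
  obtain c C where cC: "\<And>xs. xs \<in> act_domain k H \<Longrightarrow> vec_size (f (Suc l) xs) \<le> c * vecs_size xs + C"
    using act_size_preserving_affine[OF activation_size[of "Suc l"]] assms(1) by auto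
  define A' where "A' = A + H * (k * (5 + 3 * A))"
  have "vec_size v \<le> (c * A' + C) * bitlen (length w)" if "v \<in> set (run w (Suc l))" for w v
  proof -
    let ?\<beta> = "bitlen (length w)"
    obtain i where i: "i < length w" "v = run w (Suc l) ! i"
      using \<open>v \<in> set (run w (Suc l))\<close> by (auto simp: in_set_conv_nth)
    let ?xs = "run w l ! i # map (\<lambda>h. attention w l h (run w l ! i)) [0..<H]"
    have "vecs_size ?xs \<le> A' * ?\<beta>"
      unfolding A'_def using vecs_size_activation_input assms(1) i(1) A by blast
    moreover have "C \<le> C * ?\<beta>"
      using bitlen_ge_1[of "length w"] by simp
    ultimately have bound: "c * vecs_size ?xs + C \<le> (c * A' + C) * ?\<beta>"
      by (simp add: algebra_simps add_mono)
    have "?xs \<in> act_domain k H"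
      using assms(1) i(1) by (rule activation_input_in_domain)
    moreover have "v = f (Suc l) ?xs"
      using i by (simp only: run_Suc_nth)
    ultimately show ?thesis
      using order_trans[OF cC bound] by simp
  qed
  then show ?thesis
    by blast
qed

lemma run_size_bound: "l \<le> nL \<Longrightarrow> \<exists>A. \<forall>w. \<forall>v\<in>set (run w l). vec_size v \<le> A * bitlen (length w)"
proof (induction l)
  case 0
  show ?case
    by (rule run_0_size_bound)
next
  case (Suc l)
  then obtain A where "\<forall>w. \<forall>v\<in>set (run w l). vec_size v \<le> A * bitlen (length w)"
    by auto
  moreover have "l < nL"
    using Suc.prems by simp
  ultimately show ?case
    using run_Suc_size_bound by blast
qed

lemma uniform_size_bound:
  obtains A where "\<And>l w. l \<le> nL \<Longrightarrow> set (run w l) \<subseteq> small_vecs k (A * bitlen (length w))"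
    and "\<And>l w h x. l \<le> nL \<Longrightarrow> attention w l h x \<in> small_vecs k (A * bitlen (length w))"
proof -
  have "\<forall>l\<in>{..nL}. \<exists>A. \<forall>w. \<forall>v\<in>set (run w l). vec_size v \<le> A * bitlen (length w)"
    using run_size_bound by simp
  then obtain Af where Af: "\<forall>l\<in>{..nL}. \<forall>w. \<forall>v\<in>set (run w l). vec_size v \<le> Af l * bitlen (length w)"
    by (rule bchoice[THEN exE])
  define A0 where "A0 = (\<Sum>l\<le>nL. Af l)"
  have run: "vec_size v \<le> A0 * bitlen (length w)" if "l \<le> nL" "v \<in> set (run w l)" for l w v
  proof -
    have "Af l \<le> A0"
      unfolding A0_def using that(1) by (intro member_le_sum) simp_all
    then show ?thesis
      using Af that by (meson atMost_iff le_trans mult_le_mono1)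
  qed
  define A where "A = A0 + k * (5 + 3 * A0)"
  show ?thesis
  proof (rule that)
    show "set (run w l) \<subseteq> small_vecs k (A * bitlen (length w))" if "l \<le> nL" for l w
      using run[OF that] length_run_elem[OF that]
      by (auto simp: A_def add_mult_distrib trans_le_add1 intro: small_vecsI)
    show "attention w l h x \<in> small_vecs k (A * bitlen (length w))" if "l \<le> nL" for l w h x
      using attention_size_linear[of l w A0 h x] run that length_attention[OF that]
      by (auto simp: A_def add_mult_distrib intro!: small_vecsI)
  qed
qed

context
  fixes F B n :: nat
  assumes n: "1 \<le> n"
    and fanin: "2 \<le> F" "k \<le> F" "H \<le> F" "card (UNIV :: 'a set) \<le> F" "n + 1 \<le> F"
      "card (small_vecs k B) ^ H \<le> F" "n * card (small_vecs k B) * 4 ^ B \<le> F"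
    and small_run: "\<And>w l. length w = n \<Longrightarrow> l \<le> nL \<Longrightarrow> set (run w l) \<subseteq> small_vecs k B"
    and small_attention: "\<And>w l h x. length w = n \<Longrightarrow> l \<le> nL \<Longrightarrow> attention w l h x \<in> small_vecs k B"
begin

lemma positionwise_computable_run_0: "positionwise_computable F 3 n (small_vecs k B) (\<lambda>w. run w 0)"
proof -
  have "val_computable F 3 n (\<lambda>w. run w 0 ! j)" if "j < n" for j
  proof -
    have "val_computable F 0 n (\<lambda>w :: 'a list. w ! j)"
      unfolding val_computable_def using computable_input[OF that] by blast
    moreover have "card (values_at n (\<lambda>w :: 'a list. w ! j)) \<le> F"
      using card_mono[OF finite_UNIV subset_UNIV, of "values_at n (\<lambda>w :: 'a list. w ! j)"] fanin(4)
      by linarith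
    ultimately have "val_computable F (0 + 3) n (\<lambda>w. \<phi> (w ! j) (Suc j))"
      using fanin(1) by (rule val_computable_comp)
    then have "val_computable F 3 n (\<lambda>w. \<phi> (w ! j) (Suc j))"
      by simp
    then show ?thesis
      by (rule val_computable_cong) (simp add: run_0_nth that)
  qed
  then show ?thesis
    using small_run by (simp add: positionwise_computable_def)
qed

lemma val_computable_heads:
  assumes "l < nL" and run: "positionwise_computable F D n (small_vecs k B) (\<lambda>w. run w l)"
  shows "val_computable F (D + 17) n (\<lambda>w. map (\<lambda>h. attention w l h x) [0..<H])"
  unfolding val_computable_def
proof
  fix ys
  have "\<forall>h\<in>set [0..<H]. computable F (D + 15) n (\<lambda>w. attention w l h x = ys ! h)"
    using val_computable_weighted_sum_sat_attn[OF run n fanin(1,2,5,7)]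
    by (simp add: attention_def val_computable_def)
  from computable_Ball[OF this] fanin(3)
  have all: "computable F (Suc (D + 15)) n (\<lambda>w. \<forall>h\<in>set [0..<H]. attention w l h x = ys ! h)"
    by simp
  have conj: "computable F (Suc (Suc (D + 15))) n
      (\<lambda>w. length ys = H \<and> (\<forall>h\<in>set [0..<H]. attention w l h x = ys ! h))"
    by (rule computable_conj[OF computable_const all fanin(1)]) simp
  have eq: "(map (\<lambda>h. attention w l h x) [0..<H] = ys)
      \<longleftrightarrow> length ys = H \<and> (\<forall>h\<in>set [0..<H]. attention w l h x = ys ! h)" for w
  proof
    assume "length ys = H \<and> (\<forall>h\<in>set [0..<H]. attention w l h x = ys ! h)"
    then show "map (\<lambda>h. attention w l h x) [0..<H] = ys"
      by (intro nth_equalityI) simp_all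
  qed auto
  from conj show "computable F (D + 17) n (\<lambda>w. map (\<lambda>h. attention w l h x) [0..<H] = ys)"
    by (rule computable_mono[THEN computable_cong]) (simp_all add: eq)
qed

lemma card_values_heads:
  assumes "l < nL"
  shows "card (values_at n (\<lambda>w. map (\<lambda>h. attention w l h x) [0..<H])) \<le> F"
proof -
  have "values_at n (\<lambda>w. map (\<lambda>h. attention w l h x) [0..<H])
      \<subseteq> {ys. set ys \<subseteq> small_vecs k B \<and> length ys = H}"
    using small_attention assms by (auto simp: values_at_def)
  then have "card (values_at n (\<lambda>w. map (\<lambda>h. attention w l h x) [0..<H]))
      \<le> card {ys. set ys \<subseteq> small_vecs k B \<and> length ys = H}"
    by (rule card_mono[OF finite_lists_length_eq[OF finite_small_vecs]])
  also have "\<dots> = card (small_vecs k B) ^ H"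
    by (rule card_lists_length_eq[OF finite_small_vecs])
  finally show ?thesis
    using fanin(6) by linarith
qed

lemma positionwise_computable_run_Suc:
  assumes l: "l < nL" and run: "positionwise_computable F D n (small_vecs k B) (\<lambda>w. run w l)"
  shows "positionwise_computable F (D + 22) n (small_vecs k B) (\<lambda>w. run w (Suc l))"
proof -
  have "val_computable F (D + 22) n (\<lambda>w. run w (Suc l) ! i)" if i: "i < n" for i
    unfolding val_computable_def
  proof
    fix t
    have "val_computable F (D + 20) n (\<lambda>w. run w l ! i)"
      using run i val_computable_mono[of F D n "\<lambda>w. run w l ! i" F "D + 20"]
      by (simp add: positionwise_computable_def)
    moreover have "card (values_at n (\<lambda>w. run w l ! i)) \<le> F"
      using card_mono[OF finite_small_vecs values_at_positionwise_subset[OF run i]]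
        card_small_vecs_le_fanin[OF run n fanin(1,2,5,7)] by linarith
    moreover have "\<forall>x\<in>values_at n (\<lambda>w. run w l ! i).
        computable F (D + 20) n (\<lambda>w. f (Suc l) (x # map (\<lambda>h. attention w l h x) [0..<H]) = t)"
    proof
      fix x
      show "computable F (D + 20) n (\<lambda>w. f (Suc l) (x # map (\<lambda>h. attention w l h x) [0..<H]) = t)"
        using computable_comp[OF val_computable_heads[OF l run, where x = x]
            card_values_heads[OF l, where x = x] fanin(1), of "\<lambda>ys. f (Suc l) (x # ys) = t"]
        by (simp add: add.commute)
    qed
    ultimately have "computable F (Suc (Suc (D + 20))) n
        (\<lambda>w. f (Suc l) (run w l ! i # map (\<lambda>h. attention w l h (run w l ! i)) [0..<H]) = t)"
      using fanin(1)
      by (rule computable_bind[where Q = "\<lambda>x w. f (Suc l) (x # map (\<lambda>h. attention w l h x) [0..<H]) = t"])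
    then show "computable F (D + 22) n (\<lambda>w. run w (Suc l) ! i = t)"
      by (rule computable_mono[THEN computable_cong]) (simp_all add: run_Suc_nth i)
  qed
  then show ?thesis
    using small_run l by (simp add: positionwise_computable_def)
qed

lemma positionwise_computable_run:
  "l \<le> nL \<Longrightarrow> positionwise_computable F (3 + 22 * l) n (small_vecs k B) (\<lambda>w. run w l)"
proof (induction l)
  case 0
  show ?case
    using positionwise_computable_run_0 by simp
next
  case (Suc l)
  then show ?case
    using positionwise_computable_run_Suc[of l "3 + 22 * l"] by (simp add: add.commute)
qed

lemma computable_acceptance: "computable F (3 + 22 * nL + 3) n (\<lambda>w. acc (run w nL ! 0))"
proof -
  have run: "positionwise_computable F (3 + 22 * nL) n (small_vecs k B) (\<lambda>w. run w nL)"
    by (rule positionwise_computable_run) simp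
  have "card (values_at n (\<lambda>w. run w nL ! 0)) \<le> F"
    using card_mono[OF finite_small_vecs values_at_positionwise_subset[OF run]] n
      card_small_vecs_le_fanin[OF run n fanin(1,2,5,7)] by fastforce
  moreover have "val_computable F (3 + 22 * nL) n (\<lambda>w. run w nL ! 0)"
    using run n by (simp add: positionwise_computable_def)
  ultimately show ?thesis
    using computable_comp fanin(1) by blast
qed

end

theorem language_in_TC0:
  fixes acc :: "fl list \<Rightarrow> bool" and Lang :: "'a list set"
  assumes recognizes: "\<And>w. w \<noteq> [] \<Longrightarrow> acc (hd (run w nL)) \<longleftrightarrow> w \<in> Lang"
  shows "Lang \<in> TC0"
proof -
  obtain A where small_run: "\<And>l w. l \<le> nL \<Longrightarrow> set (run w l) \<subseteq> small_vecs k (A * bitlen (length w))"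
    and small_attention: "\<And>l w h x. l \<le> nL \<Longrightarrow> attention w l h x \<in> small_vecs k (A * bitlen (length w))"
    using uniform_size_bound by blast
  define K where "K = 2 + k + H + card (UNIV :: 'a set)"
  define Z where "Z = 1 + 3 * A * k * (H + 1) + 2 * A"
  define F where "F n = K * (2 ^ bitlen n) ^ Z" for n
  have "computable (F n) (3 + 22 * nL + 3) n (\<lambda>w. w \<in> Lang)" for n
  proof (cases "n = 0")
    case True
    have "computable (F n) (3 + 22 * nL + 3) n (\<lambda>w. [] \<in> Lang)"
      by (rule computable_const) simp
    then show ?thesis
      by (rule computable_cong) (simp add: True)
  next
    case False
    have "1 \<le> K"
      by (simp add: K_def)
    then have fanin: "n + 1 \<le> F n" "card (small_vecs k (A * bitlen n)) ^ H \<le> F n"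
        "n * card (small_vecs k (A * bitlen n)) * 4 ^ (A * bitlen n) \<le> F n"
      unfolding F_def Z_def by (rule fanin_bounds)+
    have "K * 1 \<le> F n"
      unfolding F_def by (intro mult_le_mono2) simp
    then have "computable (F n) (3 + 22 * nL + 3) n (\<lambda>w. acc (run w nL ! 0))"
      using False fanin small_run small_attention
      by (intro computable_acceptance[where B = "A * bitlen n"]) (auto simp: K_def)
    then show ?thesis
    proof (rule computable_cong)
      fix w :: "'a list"
      assume "length w = n"
      then have "w \<noteq> []" "run w nL \<noteq> []"
        using False by (auto simp flip: length_0_conv)
      then show "acc (run w nL ! 0) \<longleftrightarrow> w \<in> Lang"
        using recognizes[of w] unfolding hd_conv_nth[OF \<open>run w nL \<noteq> []\<close>] by blast
    qed
  qed
  moreover have "F n \<le> (K * 2 ^ Z + Z) * (n + 1) ^ (K * 2 ^ Z + Z)" for n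
    unfolding F_def by (rule fanin_polynomial)
  ultimately show ?thesis
    by (rule TC0_if_computable)
qed

end

theorem proposition4:
  "(T_s_F :: ('a::finite) list set set) \<subseteq> TC0"
proof
  fix Lang :: "'a list set"
  assume "Lang \<in> T_s_F"
  then obtain k nL H \<phi> s f W b where
    "\<forall>\<sigma> i. length (\<phi> \<sigma> i) = k" "emb_size_preserving \<phi>"
    "\<forall>l \<in> {1..nL}. (\<forall>xs \<in> act_domain k H. length (f l xs) = k) \<and> act_size_preserving k H (f l)"
    and recognizes: "\<forall>w. w \<noteq> [] \<longrightarrow>
       ((\<Sum>(c, x) \<leftarrow> zip W (hd (tf_run k H \<phi> s f w nL)). c * fl_val x) + b > 0 \<longleftrightarrow> w \<in> Lang)"
    unfolding T_s_F_def by blast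
  then interpret saturated_transformer k H nL \<phi> s f
    by unfold_locales auto
  show "Lang \<in> TC0"
    by (rule language_in_TC0[where acc = "\<lambda>u. (\<Sum>(c, x) \<leftarrow> zip W u. c * fl_val x) + b > 0"])
      (use recognizes in simp)
qed

end
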